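(* Let $\Sigma$ be a closed oriented surface and let $\mathcal T$ be a coherent double circuit configuration on $\Sigma$ in $\mathbb P^d$ ($d\ge 2$). Let $\mathcal T'$ be obtained from $\mathcal T$ by one of the moves (M1) (degree-two vertex removal or addition) or (M2) (urban renewal) described below, where the data are generic, so that all labels of $\mathcal T'$ are well defined (every intersection and span used below is a point, respectively a hyperplane) and $\mathcal T'$ is again a double circuit configuration in which all pairings entering the multi-ratios of its faces are nonzero. Then $\mathcal T'$ is coherent.
   Context: A tiling of a closed oriented surface $\Sigma$ is a bipartite graph $\Gamma$ (vertices colored white and black, each edge joining vertices of different colors) embedded in $\Sigma$ so that every face (connected component of $\Sigma\setminus\Gamma$) is an open disk, together with an assignment of a point of $\mathbb P^d$ to every white vertex and a hyperplane of $\mathbb P^d$ to every black vertex. Each face is a $2n$-gon whose boundary vertices alternate in color. Multi-ratio: for points $A_1,\dots,A_n$ and hyperplanes $\ell_1,\dots,\ell_n$ of $\mathbb P^d$, choose representing vectors $\mathbf A_i\in\mathbb C^{d+1}$ and covectors $\boldsymbol\ell_i$, and set $[A_1,\ell_1,\dots,A_n,\ell_n]=\frac{\boldsymbol\ell_1(\mathbf A_1)\cdots\boldsymbol\ell_n(\mathbf A_n)}{\boldsymbol\ell_1(\mathbf A_2)\cdots\boldsymbol\ell_n(\mathbf A_1)}$ (indices mod $n$; this is independent of the lifts). A face is coherent if the multi-ratio of the labels of its boundary vertices, read in clockwise order (with respect to the orientation of $\Sigma$), equals $1$; a tiling is coherent if every face is coherent. A circuit in a projective space is a linearly dependent set of points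 no proper subset of which is linearly dependent (e.g. two equal points; three pairwise distinct collinear points). Hyperplanes are regarded as points of the dual projective space. A tiling is a double circuit configuration if for every vertex, the labels of its neighbors form a circuit. Moves. (M1) Degree-two vertex removal: if a white vertex labeled $A$ has degree 2 with distinct black neighbors $u,u'$ (which, by the circuit condition, carry the same hyperplane $\ell$), delete this white vertex and its two edges and merge $u,u'$ into one black vertex labeled $\ell$ adjacent to all former neighbors of $u$ and $u'$. The same with colors (points/hyperplanes) interchanged. Degree-two vertex addition is the inverse operation. (M2) Urban renewal: suppose there is a quadrilateral face with boundary vertices, in cyclic order, $A$ (white), $c$ (black), $B$ (white), $d$ (black), where $A$'s other black neighbors are labeled $a_1,\dots,a_m$, $c$'s other white neighbors $C_1,\dots,C_k$, $B$'s other black neighbors $b_1,\dots,b_n$, $d$'s other white neighbors $D_1,\dots,D_l$. Delete the four edges $Ac,cB,Bd,dA$; insert new vertices $g$ (black), $E$ (white), $h$ (black), $F$ (white) forming a new quadrilateral face with cycle $g,E,h,F$, and add edges $A g$, $c E$, $B h$, $d F$ (so the square face is replaced by an inner square and four surrounding quadrilateral faces). The new labels are $E=\langle A,B\rangle\cap\langle C_1,\dots,C_k\rangle$, $F=\langle A,B\rangle\cap\langle D_1,\dots,D_l\rangle$, $g=\langle c\cap d,\ a_1\cap\dots\cap a_m\rangle$, $h=\langle c\cap d,\ b_1\cap\dots\cap b_n\rangle$, where $\langle\cdot\rangle$ denotes span; all other labels are unchanged. *)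

theory Defs
  imports "HOL-Analysis.Analysis"
begin

text \<open>Points and hyperplanes of P^d are represented by nonzero representing vectors and
covectors in complex^(d+1), i.e. in complex ^ 'n with CARD('n) = d + 1.
All notions below are invariant under rescaling of the lifts.\<close>

definition pairing :: "complex ^ 'n \<Rightarrow> complex ^ 'n \<Rightarrow> complex" where
  "pairing l x = (\<Sum>i\<in>UNIV. l $ i * x $ i)"

definition hyp :: "complex ^ 'n \<Rightarrow> (complex ^ 'n) set" where
  "hyp l = {x. pairing l x = 0}"

definition fam_dependent :: "'i set \<Rightarrow> ('i \<Rightarrow> complex ^ 'n) \<Rightarrow> bool" where
  "fam_dependent N f \<longleftrightarrow> (\<exists>c. (\<exists>i\<in>N. c i \<noteq> 0) \<and> (\<Sum>i\<in>N. c i *s f i) = 0)"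

definition is_circuit :: "'i set \<Rightarrow> ('i \<Rightarrow> complex ^ 'n) \<Rightarrow> bool" where
  "is_circuit N f \<longleftrightarrow> finite N \<and> fam_dependent N f \<and> (\<forall>M. M \<subset> N \<longrightarrow> \<not> fam_dependent M f)"

text \<open>A bipartite graph embedded in a closed oriented surface with all faces open disks is
encoded combinatorially by its finite set of edges, the white and black endpoint maps and the
cyclic (rotation) orders of edges around each white and each black vertex (a hypermap).
Faces are the orbits of rotW o rotB acting on edges: an orbit e_1,...,e_n
describes the 2n-gon with boundary wv e_1, bv e_1, wv e_2, bv e_2, ..., wv e_n, bv e_n.\<close>

record ('e, 'v, 'x) tiling =
  edges :: "'e set"
  wv :: "'e \<Rightarrow> 'v"
  bv :: "'e \<Rightarrow> 'v"
  rotW :: "'e \<Rightarrow> 'e"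
  rotB :: "'e \<Rightarrow> 'e"
  lab :: "'v \<Rightarrow> 'x"

definition whites :: "('e,'v,'x) tiling \<Rightarrow> 'v set" where
  "whites T = wv T ` edges T"

definition blacks :: "('e,'v,'x) tiling \<Rightarrow> 'v set" where
  "blacks T = bv T ` edges T"

definition verts :: "('e,'v,'x) tiling \<Rightarrow> 'v set" where
  "verts T = whites T \<union> blacks T"

definition nbrsW :: "('e,'v,'x) tiling \<Rightarrow> 'v \<Rightarrow> 'v set" where
  "nbrsW T v = {bv T e | e. e \<in> edges T \<and> wv T e = v}"

definition nbrsB :: "('e,'v,'x) tiling \<Rightarrow> 'v \<Rightarrow> 'v set" where
  "nbrsB T v = {wv T e | e. e \<in> edges T \<and> bv T e = v}"

definition is_tiling :: "('e,'v,complex ^ 'n) tiling \<Rightarrow> bool" where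
  "is_tiling T \<longleftrightarrow>
     finite (edges T) \<and> edges T \<noteq> {} \<and>
     whites T \<inter> blacks T = {} \<and>
     bij_betw (rotW T) (edges T) (edges T) \<and>
     bij_betw (rotB T) (edges T) (edges T) \<and>
     (\<forall>e\<in>edges T. wv T (rotW T e) = wv T e) \<and>
     (\<forall>e\<in>edges T. bv T (rotB T e) = bv T e) \<and>
     (\<forall>e\<in>edges T. \<forall>f\<in>edges T. wv T e = wv T f \<longrightarrow> (\<exists>k. (rotW T ^^ k) e = f)) \<and>
     (\<forall>e\<in>edges T. \<forall>f\<in>edges T. bv T e = bv T f \<longrightarrow> (\<exists>k. (rotB T ^^ k) e = f)) \<and>
     (\<forall>e\<in>edges T. \<forall>f\<in>edges T.
        (e, f) \<in> ({(x, rotW T x) | x. x \<in> edges T} \<union> {(x, rotB T x) | x. x \<in> edges T})\<^sup>*) \<and>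
     (\<forall>v\<in>verts T. lab T v \<noteq> 0)"

definition facerot :: "('e,'v,'x) tiling \<Rightarrow> 'e \<Rightarrow> 'e" where
  "facerot T = rotW T \<circ> rotB T"

definition face_len :: "('e,'v,'x) tiling \<Rightarrow> 'e \<Rightarrow> nat" where
  "face_len T e = (LEAST k. 0 < k \<and> (facerot T ^^ k) e = e)"

text \<open>Multi-ratio [A_1, l_1, ..., A_n, l_n] of the face through edge e, with
A_i = wv e_i, l_i = bv e_i, e_i = facerot^(i-1) e, and A_(n+1) = A_1.\<close>
definition face_multiratio :: "('e,'v,complex ^ 'n) tiling \<Rightarrow> 'e \<Rightarrow> complex" where
  "face_multiratio T e =
     (\<Prod>i<face_len T e. pairing (lab T (bv T ((facerot T ^^ i) e))) (lab T (wv T ((facerot T ^^ i) e))))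
   / (\<Prod>i<face_len T e. pairing (lab T (bv T ((facerot T ^^ i) e))) (lab T (wv T ((facerot T ^^ Suc i) e))))"

definition coherent :: "('e,'v,complex ^ 'n) tiling \<Rightarrow> bool" where
  "coherent T \<longleftrightarrow> (\<forall>e\<in>edges T. face_multiratio T e = 1)"

definition nonzero_pairings :: "('e,'v,complex ^ 'n) tiling \<Rightarrow> bool" where
  "nonzero_pairings T \<longleftrightarrow> (\<forall>e\<in>edges T.
      pairing (lab T (bv T e)) (lab T (wv T e)) \<noteq> 0 \<and>
      pairing (lab T (bv T e)) (lab T (wv T (facerot T e))) \<noteq> 0)"

definition double_circuit :: "('e,'v,complex ^ 'n) tiling \<Rightarrow> bool" where
  "double_circuit T \<longleftrightarrow> is_tiling T \<and>
     (\<forall>v\<in>whites T. is_circuit (nbrsW T v) (lab T)) \<and>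
     (\<forall>v\<in>blacks T. is_circuit (nbrsB T v) (lab T))"

definition first_return :: "('e \<Rightarrow> 'e) \<Rightarrow> 'e set \<Rightarrow> 'e \<Rightarrow> 'e" where
  "first_return p S e = (p ^^ (LEAST k. 0 < k \<and> (p ^^ k) e \<in> S)) e"

text \<open>(M1) Removal of a white vertex of degree two (edges e1, e2) with distinct black
neighbours u = bv e1, u' = bv e2; u and u' are merged into one vertex (named u).
The rotation at the merged vertex is obtained by concatenating the two rotations.\<close>
definition remove_white :: "('e,'v,complex ^ 'n) tiling \<Rightarrow> ('e,'v,complex ^ 'n) tiling \<Rightarrow> bool" where
  "remove_white T T' \<longleftrightarrow> (\<exists>e1 e2.
     e1 \<in> edges T \<and> e2 \<in> edges T \<and> e1 \<noteq> e2 \<and>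
     {f\<in>edges T. wv T f = wv T e1} = {e1, e2} \<and>
     bv T e1 \<noteq> bv T e2 \<and>
     edges T' = edges T - {e1, e2} \<and>
     (\<forall>f\<in>edges T'. wv T' f = wv T f \<and>
        bv T' f = (if bv T f = bv T e2 then bv T e1 else bv T f) \<and>
        rotW T' f = rotW T f \<and>
        rotB T' f = first_return (rotB T \<circ> Transposition.transpose e1 e2) (edges T') f) \<and>
     (\<forall>v\<in>verts T'. lab T' v = lab T v))"

definition remove_black :: "('e,'v,complex ^ 'n) tiling \<Rightarrow> ('e,'v,complex ^ 'n) tiling \<Rightarrow> bool" where
  "remove_black T T' \<longleftrightarrow> (\<exists>e1 e2.
     e1 \<in> edges T \<and> e2 \<in> edges T \<and> e1 \<noteq> e2 \<and>
     {f\<in>edges T. bv T f = bv T e1} = {e1, e2} \<and>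
     wv T e1 \<noteq> wv T e2 \<and>
     edges T' = edges T - {e1, e2} \<and>
     (\<forall>f\<in>edges T'. bv T' f = bv T f \<and>
        wv T' f = (if wv T f = wv T e2 then wv T e1 else wv T f) \<and>
        rotB T' f = rotB T f \<and>
        rotW T' f = first_return (rotW T \<circ> Transposition.transpose e1 e2) (edges T') f) \<and>
     (\<forall>v\<in>verts T'. lab T' v = lab T v))"

definition move_M1 :: "('e,'v,complex ^ 'n) tiling \<Rightarrow> ('e,'v,complex ^ 'n) tiling \<Rightarrow> bool" where
  "move_M1 T T' \<longleftrightarrow> remove_white T T' \<or> remove_white T' T \<or> remove_black T T' \<or> remove_black T' T"

text \<open>Replace two consecutive elements x, y (with p x = y) of a cycle of p by a single new element z.\<close>
definition merge2 :: "('e \<Rightarrow> 'e) \<Rightarrow> 'e \<Rightarrow> 'e \<Rightarrow> 'e \<Rightarrow> 'e \<Rightarrow> 'e" where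
  "merge2 p x y z e =
     (if e = z then (if p y = x then z else p y) else if p e = x then z else p e)"

text \<open>(M2) Urban renewal at the quadrilateral face through edge ea:
ea = A-c, eb = rotB ea = c-B, ec = rotW eb = B-d, ed = rotB ec = d-A, rotW ed = ea.
The four edges are replaced by spokes kA = A-g, kc = E-c, kB = B-h, kd = F-d and the
square q1 = E-g, q2 = E-h, q3 = F-h, q4 = F-g, with rotations consistent with the embedding.
The new labels are the (generic, i.e. well-defined) intersections/spans from the paper;
a linear subspace of complex^(d+1) stands for the corresponding projective subspace.\<close>
definition urban_renewal :: "('e,'v,complex ^ 'n) tiling \<Rightarrow> ('e,'v,complex ^ 'n) tiling \<Rightarrow> bool" where
  "urban_renewal T T' \<longleftrightarrow> (\<exists>ea kA kc kB kd q1 q2 q3 q4 g E h F.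
     let eb = rotB T ea; ec = rotW T eb; ed = rotB T ec;
         A = wv T ea; c = bv T ea; B = wv T ec; d = bv T ec;
         old = {ea, eb, ec, ed}; new = {kA, kc, kB, kd, q1, q2, q3, q4};
         wv' = (wv T)(kA := A, kc := E, kB := B, kd := F, q1 := E, q2 := E, q3 := F, q4 := F);
         bv' = (bv T)(kA := g, kc := c, kB := h, kd := d, q1 := g, q2 := h, q3 := h, q4 := g);
         rW = (merge2 (merge2 (rotW T) ed ea kA) eb ec kB)
                (kc := q1, q1 := q2, q2 := kc, q4 := kd, kd := q3, q3 := q4);
         rB = (merge2 (merge2 (rotB T) ea eb kc) ec ed kd)
                (kA := q4, q4 := q1, q1 := kA, q2 := q3, q3 := kB, kB := q2)
     in ea \<in> edges T \<and> rotW T ed = ea \<and> A \<noteq> B \<and> c \<noteq> d \<and>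
        card new = 8 \<and> new \<inter> edges T = {} \<and>
        distinct [g, E, h, F] \<and> {g, E, h, F} \<inter> verts T = {} \<and>
        edges T' = (edges T - old) \<union> new \<and>
        (\<forall>f\<in>edges T'. wv T' f = wv' f \<and> bv T' f = bv' f \<and>
                       rotW T' f = rW f \<and> rotB T' f = rB f) \<and>
        (\<forall>v\<in>verts T. lab T' v = lab T v) \<and>
        lab T' E \<noteq> 0 \<and>
        vec.span {lab T' E} = vec.span {lab T A, lab T B} \<inter> vec.span (lab T ` (nbrsB T c - {A, B})) \<and>
        lab T' F \<noteq> 0 \<and>
        vec.span {lab T' F} = vec.span {lab T A, lab T B} \<inter> vec.span (lab T ` (nbrsB T d - {A, B})) \<and>
        lab T' g \<noteq> 0 \<and>
        hyp (lab T' g) = vec.span ((hyp (lab T c) \<inter> hyp (lab T d)) \<union>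
                                    \<Inter> (hyp ` lab T ` (nbrsW T A - {c, d}))) \<and>
        lab T' h \<noteq> 0 \<and>
        hyp (lab T' h) = vec.span ((hyp (lab T c) \<inter> hyp (lab T d)) \<union>
                                    \<Inter> (hyp ` lab T ` (nbrsW T B - {c, d}))))"

end

theory Submission
  imports Defs
begin

text \<open>
  The multi-ratio of a face is the product, along the cycle of the face permutation, of the edge
  weights \<open>l(A)/l(A')\<close>, where \<open>l\<close> is the black end of an edge and \<open>A\<close>, \<open>A'\<close> are the
  white ends of this edge and of the next one.  For either move, the face permutations of the old
  and of the new tiling are both first-return maps of one permutation of the union of their edge
  sets, with weights whose products over the return blocks are the old and the new edge weights;
  hence a new face that meets the old edges has the multi-ratio of an old face.  The other new
  faces are those bounded only by the two edges of an added degree-two vertex, of multi-ratio 1,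
  and the inner square of urban renewal.

  For a degree-two white vertex the blocks multiply correctly because the two black neighbours,
  being a circuit of size two, carry proportional labels; black vertices are handled by swapping
  colours.  For urban renewal the blocks reduce to cross-ratio identities on the line \<open>AB\<close>:
  the hyperplanes \<open>c, d, g, h\<close> all contain the point where \<open>AB\<close> meets \<open>c\<close> (for \<open>d\<close> this is
  the coherence of the square), so they restrict to proportional forms on \<open>AB\<close>, which
  contains \<open>E\<close> and \<open>F\<close>; this also makes the inner square coherent.
\<close>

lemma pairing_commute: "pairing l x = pairing x l"
  by (simp add: pairing_def mult.commute)

lemma pairing_add_right: "pairing l (x + y) = pairing l x + pairing l y"
  by (simp add: pairing_def distrib_left sum.distrib)

lemma pairing_diff_right: "pairing l (x - y) = pairing l x - pairing l y"
  by (simp add: pairing_def right_diff_distrib sum_subtractf)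

lemma pairing_scale_right: "pairing l (a *s x) = a * pairing l x"
  by (simp add: pairing_def sum_distrib_left mult.left_commute)

lemma pairing_scale_left: "pairing (a *s l) x = a * pairing l x"
  by (simp add: pairing_def sum_distrib_left mult.assoc)

lemma pairing_ratio_scale_left:
  "a \<noteq> 0 \<Longrightarrow> pairing (a *s l) x / pairing (a *s l) y = pairing l x / pairing l y"
  by (simp add: pairing_scale_left)

section \<open>Orbit products and first-return maps\<close>

definition periodic :: "('a \<Rightarrow> 'a) \<Rightarrow> 'a \<Rightarrow> bool" where
  "periodic p e \<longleftrightarrow> (\<exists>n>0. (p ^^ n) e = e)"

definition orbit_len :: "('a \<Rightarrow> 'a) \<Rightarrow> 'a \<Rightarrow> nat" where
  "orbit_len p e = (LEAST k. 0 < k \<and> (p ^^ k) e = e)"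

definition orbit_prod :: "('a \<Rightarrow> 'a) \<Rightarrow> ('a \<Rightarrow> 'b::comm_monoid_mult) \<Rightarrow> 'a \<Rightarrow> 'b" where
  "orbit_prod p w e = (\<Prod>i<orbit_len p e. w ((p ^^ i) e))"

lemma periodic_if_bij_betw:
  assumes "finite S" "bij_betw p S S" "e \<in> S"
  shows "periodic p e"
proof -
  have in_S: "(p ^^ n) e \<in> S" for n
    using bij_betw_funpow[OF assms(2)] assms(3) by (meson bij_betwE)
  have "\<not> inj_on (\<lambda>i. (p ^^ i) e) {..card S}"
  proof
    assume "inj_on (\<lambda>i. (p ^^ i) e) {..card S}"
    then have "card {..card S} \<le> card S"
      using card_inj_on_le[OF _ _ assms(1)] in_S by blast
    then show False by simp
  qed
  then obtain i j where ij: "i < j" "(p ^^ i) e = (p ^^ j) e"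
    unfolding inj_on_def by (metis linorder_neqE_nat)
  then have "(p ^^ i) ((p ^^ (j - i)) e) = (p ^^ i) e"
    by (metis add_diff_inverse_nat funpow_add less_imp_le_nat not_le o_apply)
  moreover have "inj_on (p ^^ i) S"
    using bij_betw_funpow[OF assms(2)] bij_betw_def by blast
  ultimately have "(p ^^ (j - i)) e = e" using in_S assms(3) by (meson inj_onD)
  then show ?thesis unfolding periodic_def using ij by (intro exI[of _ "j - i"]) auto
qed

lemma orbit_len_pos: "periodic p e \<Longrightarrow> 0 < orbit_len p e"
  unfolding periodic_def orbit_len_def by (metis (mono_tags, lifting) LeastI_ex)

lemma funpow_orbit_len: "periodic p e \<Longrightarrow> (p ^^ orbit_len p e) e = e"
  unfolding periodic_def orbit_len_def by (metis (mono_tags, lifting) LeastI_ex)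

lemma funpow_ne_below_orbit_len: "0 < j \<Longrightarrow> j < orbit_len p e \<Longrightarrow> (p ^^ j) e \<noteq> e"
  unfolding orbit_len_def using not_less_Least by blast

lemma orbit_len_le: "0 < j \<Longrightarrow> (p ^^ j) e = e \<Longrightarrow> orbit_len p e \<le> j"
  unfolding orbit_len_def by (simp add: Least_le)

lemma orbit_len_eqI:
  "0 < L \<Longrightarrow> (p ^^ L) e = e \<Longrightarrow> (\<And>j. 0 < j \<Longrightarrow> j < L \<Longrightarrow> (p ^^ j) e \<noteq> e) \<Longrightarrow> orbit_len p e = L"
  unfolding orbit_len_def by (rule Least_equality) (auto simp: not_less[symmetric])

lemma funpow_fixed_if_fixed_step:
  assumes "periodic p e" "(p ^^ k) (p e) = p e"
  shows "(p ^^ k) e = e"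
proof -
  define L where "L = orbit_len p e"
  have closes: "(p ^^ (L - 1)) (p e) = e"
  proof -
    have "(p ^^ Suc (L - 1)) e = e"
      using funpow_orbit_len[OF assms(1)] orbit_len_pos[OF assms(1)] by (simp add: L_def)
    then show ?thesis by (simp only: funpow_Suc_right o_apply)
  qed
  have "(p ^^ k) e = (p ^^ k) ((p ^^ (L - 1)) (p e))" by (simp only: closes)
  also have "\<dots> = (p ^^ (L - 1)) ((p ^^ k) (p e))" by (metis add.commute funpow_add o_apply)
  also have "\<dots> = e" by (simp only: assms(2) closes)
  finally show ?thesis .
qed

lemma periodic_step: "periodic p e \<Longrightarrow> periodic p (p e)"
  unfolding periodic_def by (metis funpow_swap1)

lemma periodic_funpow: "periodic p e \<Longrightarrow> periodic p ((p ^^ k) e)"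
  by (induction k) (auto intro: periodic_step)

lemma orbit_len_step:
  assumes "periodic p e"
  shows "orbit_len p (p e) = orbit_len p e"
proof (rule orbit_len_eqI)
  show "0 < orbit_len p e" "(p ^^ orbit_len p e) (p e) = p e"
    using orbit_len_pos[OF assms] funpow_orbit_len[OF assms] by (simp_all add: funpow_swap1[symmetric])
  show "(p ^^ j) (p e) \<noteq> p e" if "0 < j" "j < orbit_len p e" for j
    using funpow_fixed_if_fixed_step[OF assms] funpow_ne_below_orbit_len[OF that] by blast
qed

lemma prod_funpow_shift:
  assumes "(p ^^ L) e = e"
  shows "(\<Prod>i<L. w ((p ^^ i) (p e))) = (\<Prod>i<L. w ((p ^^ i) e))"
proof (cases L)
  case (Suc m)
  have "(\<Prod>i<L. w ((p ^^ i) (p e))) = (\<Prod>i<m. w ((p ^^ Suc i) e)) * w ((p ^^ L) e)"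
    by (simp add: Suc funpow_Suc_right del: funpow.simps)
  also have "\<dots> = w e * (\<Prod>i<m. w ((p ^^ Suc i) e))"
    using assms by (simp add: mult.commute del: funpow.simps)
  also have "\<dots> = (\<Prod>i<L. w ((p ^^ i) e))"
    unfolding Suc by (subst prod.lessThan_Suc_shift) simp
  finally show ?thesis .
qed simp

lemma orbit_prod_step: "periodic p e \<Longrightarrow> orbit_prod p w (p e) = orbit_prod p w e"
  unfolding orbit_prod_def by (simp add: orbit_len_step prod_funpow_shift funpow_orbit_len)

lemma orbit_prod_funpow: "periodic p e \<Longrightarrow> orbit_prod p w ((p ^^ k) e) = orbit_prod p w e"
  by (induction k) (simp_all add: orbit_prod_step periodic_funpow)

lemma orbit_prod_cong:
  assumes "\<And>i. w ((p ^^ i) e) = w' ((p ^^ i) e)"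
  shows "orbit_prod p w e = orbit_prod p w' e"
  unfolding orbit_prod_def using assms by simp

lemma orbit_prod_two_cycle:
  assumes "p a = b" "p b = a" "a \<noteq> b"
  shows "orbit_prod p w a = w a * w b"
proof -
  have "orbit_len p a = 2"
    by (rule orbit_len_eqI) (use assms in \<open>auto simp: numeral_2_eq_2 less_Suc_eq\<close>)
  then show ?thesis unfolding orbit_prod_def using assms by (simp add: numeral_2_eq_2)
qed

lemma funpow_comp_swap: "((f \<circ> g) ^^ k) (f x) = f (((g \<circ> f) ^^ k) x)"
  by (induction k) simp_all

lemma orbit_prod_ratio_swap:
  fixes \<sigma> \<tau> :: "'a \<Rightarrow> 'a" and \<phi> :: "'a \<Rightarrow> 'b::field"
  assumes per: "periodic (\<tau> \<circ> \<sigma>) e"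
  shows "orbit_prod (\<tau> \<circ> \<sigma>) (\<lambda>x. \<phi> x / \<phi> (\<sigma> x)) e
       = inverse (orbit_prod (\<sigma> \<circ> \<tau>) (\<lambda>y. \<phi> y / \<phi> (\<tau> y)) (\<sigma> e))"
proof -
  define L where "L = orbit_len (\<tau> \<circ> \<sigma>) e"
  define x where "x i = ((\<tau> \<circ> \<sigma>) ^^ i) e" for i
  have "((\<sigma> \<circ> \<tau>) ^^ k) (\<sigma> e) = \<sigma> e \<longleftrightarrow> x k = x 0" for k
  proof
    assume "((\<sigma> \<circ> \<tau>) ^^ k) (\<sigma> e) = \<sigma> e"
    then have "((\<tau> \<circ> \<sigma>) ^^ k) ((\<tau> \<circ> \<sigma>) e) = (\<tau> \<circ> \<sigma>) e"
      using funpow_comp_swap[where f=\<tau> and g=\<sigma> and k=k and x="\<sigma> e"] by simp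
    then show "x k = x 0" unfolding x_def using funpow_fixed_if_fixed_step[OF per] by simp
  qed (simp add: x_def funpow_comp_swap)
  then have len: "orbit_len (\<sigma> \<circ> \<tau>) (\<sigma> e) = L"
    unfolding orbit_len_def L_def x_def by simp
  have "orbit_prod (\<tau> \<circ> \<sigma>) (\<lambda>x. \<phi> x / \<phi> (\<sigma> x)) e
      = (\<Prod>i<L. \<phi> (x i)) / (\<Prod>i<L. \<phi> (\<sigma> (x i)))"
    unfolding orbit_prod_def L_def[symmetric] x_def by (simp add: prod_dividef)
  moreover have "orbit_prod (\<sigma> \<circ> \<tau>) (\<lambda>y. \<phi> y / \<phi> (\<tau> y)) (\<sigma> e)
      = (\<Prod>i<L. \<phi> (\<sigma> (x i))) / (\<Prod>i<L. \<phi> (x (Suc i)))"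
    unfolding orbit_prod_def len x_def by (simp add: funpow_comp_swap prod_dividef)
  moreover have "(\<Prod>i<L. \<phi> (x (Suc i))) = (\<Prod>i<L. \<phi> (x i))"
    using prod_funpow_shift[OF funpow_orbit_len[OF per], of \<phi>]
    unfolding x_def L_def by (simp add: funpow_Suc_right del: funpow.simps)
  ultimately show ?thesis by simp
qed

definition first_hit :: "'a set \<Rightarrow> ('a \<Rightarrow> 'a) \<Rightarrow> ('a \<Rightarrow> 'b::comm_monoid_mult) \<Rightarrow> 'a \<Rightarrow> 'a \<Rightarrow> 'b \<Rightarrow> bool" where
  "first_hit S p w x y c \<longleftrightarrow> (\<exists>k>0. (p ^^ k) x = y \<and> y \<in> S \<and>
     (\<forall>j. 0 < j \<longrightarrow> j < k \<longrightarrow> (p ^^ j) x \<notin> S) \<and> c = (\<Prod>j<k. w ((p ^^ j) x)))"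

definition induced_on :: "'a set \<Rightarrow> ('a \<Rightarrow> 'a) \<Rightarrow> ('a \<Rightarrow> 'b::comm_monoid_mult) \<Rightarrow> ('a \<Rightarrow> 'a) \<Rightarrow> ('a \<Rightarrow> 'b) \<Rightarrow> bool" where
  "induced_on S p w q v \<longleftrightarrow> (\<forall>x\<in>S. first_hit S p w x (q x) (v x))"

lemma first_hit_step: "p x \<in> S \<Longrightarrow> first_hit S p w x (p x) (w x)"
  unfolding first_hit_def by (rule exI[of _ 1]) auto

lemma first_hit_Suc:
  assumes "p x \<notin> S" "first_hit S p w (p x) y c"
  shows "first_hit S p w x y (w x * c)"
proof -
  obtain k where k: "0 < k" "(p ^^ k) (p x) = y" "y \<in> S"
    "\<forall>j. 0 < j \<longrightarrow> j < k \<longrightarrow> (p ^^ j) (p x) \<notin> S" "c = (\<Prod>j<k. w ((p ^^ j) (p x)))"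
    using assms(2) unfolding first_hit_def by auto
  have A: "(p ^^ j) x \<notin> S" if j: "0 < j" "j < Suc k" for j
  proof -
    obtain i where i: "j = Suc i" using gr0_implies_Suc[OF j(1)] by blast
    have "(p ^^ j) x = (p ^^ i) (p x)" unfolding i by (simp only: funpow_Suc_right o_apply)
    moreover have "(p ^^ i) (p x) \<notin> S"
      using assms(1) k(4) j(2) i by (cases "i = 0") simp_all
    ultimately show ?thesis by simp
  qed
  have B: "w x * c = (\<Prod>j<Suc k. w ((p ^^ j) x))"
    unfolding k(5) prod.lessThan_Suc_shift by (simp only: funpow_Suc_right o_apply funpow_0)
  have C: "(p ^^ Suc k) x = y" using k(2) by (simp only: funpow_Suc_right o_apply)
  show ?thesis
    unfolding first_hit_def by (rule exI[of _ "Suc k"]) (use A B C k(3) in simp)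
qed

lemma first_hit_two_steps:
  assumes "p x \<notin> S" "p (p x) \<in> S"
  shows "first_hit S p w x (p (p x)) (w x * w (p x))"
  using first_hit_Suc[OF assms(1) first_hit_step[of p "p x" S w, OF assms(2)]] .

lemma first_hit_three_steps:
  assumes "p x \<notin> S" "p (p x) \<notin> S" "p (p (p x)) \<in> S"
  shows "first_hit S p w x (p (p (p x))) (w x * (w (p x) * w (p (p x))))"
  using first_hit_Suc[OF assms(1) first_hit_two_steps[OF assms(2,3)]] .

lemma induced_on_self: "(\<And>x. x \<in> S \<Longrightarrow> p x \<in> S) \<Longrightarrow> induced_on S p w p w"
  unfolding induced_on_def by (simp add: first_hit_step)

lemma prod_lessThan_add: "(\<Prod>j<a + b. g j) = (\<Prod>j<a. g j) * (\<Prod>j<b. g (a + j))"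
  for a b :: nat
  by (induction b) (simp_all add: mult.assoc)

lemma in_range_if_not_between:
  fixes R :: "nat \<Rightarrow> nat"
  assumes "strict_mono R" "R 0 = 0" "\<And>n. \<not> (R n < j \<and> j < R (Suc n))"
  shows "j \<in> range R"
proof -
  have "\<exists>n. R n \<le> j \<and> j < R (Suc n)"
  proof (induction j)
    case 0
    show ?case using assms strict_monoD[OF assms(1), of 0 1] by (intro exI[of _ 0]) simp
  next
    case (Suc j)
    then obtain n where n: "R n \<le> j" "j < R (Suc n)" by blast
    show ?case
    proof (cases "Suc j < R (Suc n)")
      case True
      then show ?thesis using n(1) by (intro exI[of _ n]) simp
    next
      case False
      then have "R (Suc n) = Suc j" using n(2) by simp
      then show ?thesis using strict_monoD[OF assms(1), of "Suc n" "Suc (Suc n)"]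
        by (intro exI[of _ "Suc n"]) simp
    qed
  qed
  then obtain n where "R n \<le> j" "j < R (Suc n)" by blast
  then have "j = R n" using assms(3)[of n] by simp
  then show ?thesis by simp
qed

lemma induced_on_return_times:
  assumes ind: "induced_on S p w q v" and x: "x \<in> S"
  obtains R where "R 0 = 0" "strict_mono R" "\<And>n. (q ^^ n) x = (p ^^ R n) x"
    "\<And>n. (\<Prod>i<n. v ((q ^^ i) x)) = (\<Prod>j<R n. w ((p ^^ j) x))"
    "\<And>j. (p ^^ j) x \<in> S \<Longrightarrow> j \<in> range R"
proof -
  have "\<forall>y\<in>S. \<exists>k. 0 < k \<and> (p ^^ k) y = q y \<and> q y \<in> S \<and>
      (\<forall>j. 0 < j \<longrightarrow> j < k \<longrightarrow> (p ^^ j) y \<notin> S) \<and> v y = (\<Prod>j<k. w ((p ^^ j) y))"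
    using ind unfolding induced_on_def first_hit_def by blast
  then obtain K where K: "\<And>y. y \<in> S \<Longrightarrow> 0 < K y \<and> (p ^^ K y) y = q y \<and> q y \<in> S \<and>
      (\<forall>j. 0 < j \<longrightarrow> j < K y \<longrightarrow> (p ^^ j) y \<notin> S) \<and> v y = (\<Prod>j<K y. w ((p ^^ j) y))"
    by metis
  have qS: "(q ^^ i) x \<in> S" for i
    by (induction i) (use x K in auto)
  define R where "R n = (\<Sum>i<n. K ((q ^^ i) x))" for n
  have R_Suc: "R (Suc n) = R n + K ((q ^^ n) x)" for n
    by (simp add: R_def)
  have qR: "(q ^^ n) x = (p ^^ R n) x" for n
  proof (induction n)
    case (Suc n)
    have "(q ^^ Suc n) x = (p ^^ K ((q ^^ n) x)) ((p ^^ R n) x)"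
      using K[OF qS[of n]] Suc by simp
    then show ?case by (metis R_Suc add.commute funpow_add o_apply)
  qed (simp add: R_def)
  have prodR: "(\<Prod>i<n. v ((q ^^ i) x)) = (\<Prod>j<R n. w ((p ^^ j) x))" for n
  proof (induction n)
    case (Suc n)
    have "v ((q ^^ n) x) = (\<Prod>j<K ((q ^^ n) x). w ((p ^^ (R n + j)) x))"
      using K[OF qS[of n]] by (simp add: qR funpow_add add.commute)
    then show ?case using Suc by (simp add: R_Suc prod_lessThan_add)
  qed (simp add: R_def)
  have mono: "strict_mono R"
    by (rule strict_monoI_Suc) (use K qS in \<open>simp add: R_Suc\<close>)
  have between: "(p ^^ j) x \<notin> S" if n: "R n < j" "j < R (Suc n)" for n j
  proof -
    have "(p ^^ (j - R n)) ((q ^^ n) x) = (p ^^ j) x"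
      using n(1) unfolding qR by (metis funpow_add less_imp_le_nat le_add_diff_inverse2 o_apply)
    moreover have "0 < j - R n" "j - R n < K ((q ^^ n) x)" using n R_Suc by simp_all
    ultimately show ?thesis using K[OF qS[of n]] by metis
  qed
  have visits: "j \<in> range R" if "(p ^^ j) x \<in> S" for j
  proof (rule in_range_if_not_between[OF mono])
    show "R 0 = 0" by (simp add: R_def)
    show "\<not> (R n < j \<and> j < R (Suc n))" for n using between that by blast
  qed
  show ?thesis by (rule that[OF _ mono qR prodR visits]) (simp add: R_def)
qed

lemma orbit_prod_induced:
  assumes ind: "induced_on S p w q v" and x: "x \<in> S" and per: "periodic q x"
  shows "periodic p x" "orbit_prod q v x = orbit_prod p w x"
proof -
  obtain R where R: "R 0 = 0" "strict_mono R" "\<And>n. (q ^^ n) x = (p ^^ R n) x"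
    "\<And>n. (\<Prod>i<n. v ((q ^^ i) x)) = (\<Prod>j<R n. w ((p ^^ j) x))"
    "\<And>j. (p ^^ j) x \<in> S \<Longrightarrow> j \<in> range R"
    using induced_on_return_times[OF ind x] by blast
  define n where "n = orbit_len q x"
  have p_closes: "(p ^^ R n) x = x" using R(3) funpow_orbit_len[OF per] n_def by metis
  have R_pos: "0 < R n"
    using strict_monoD[OF R(2) orbit_len_pos[OF per]] R(1) n_def by simp
  show per_p: "periodic p x" unfolding periodic_def using p_closes R_pos by blast
  have "orbit_len p x = R n"
  proof (rule antisym)
    show "orbit_len p x \<le> R n" by (rule orbit_len_le[OF R_pos p_closes])
    obtain m where m: "orbit_len p x = R m"
      using R(5)[of "orbit_len p x"] funpow_orbit_len[OF per_p] x by auto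
    have "m \<noteq> 0" using m R(1) orbit_len_pos[OF per_p] by (cases m) auto
    moreover have "(q ^^ m) x = x" using R(3) m funpow_orbit_len[OF per_p] by simp
    ultimately have "n \<le> m" unfolding n_def by (simp add: orbit_len_le)
    then show "R n \<le> orbit_len p x" using m R(2) by (simp add: strict_mono_less_eq)
  qed
  then show "orbit_prod q v x = orbit_prod p w x"
    unfolding orbit_prod_def using R(4) n_def by simp
qed

lemma orbit_prod_common_refinement:
  assumes "induced_on S P W q v" "induced_on S' P W q' v'" "x \<in> S'" "periodic q' x"
    and "(P ^^ k) x \<in> S" "periodic q ((P ^^ k) x)"
  shows "orbit_prod q' v' x = orbit_prod q v ((P ^^ k) x)"
  using orbit_prod_induced[OF assms(1,5,6)] orbit_prod_induced[OF assms(2,3,4)]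
    orbit_prod_funpow[of P x W k] by simp

lemma first_return_now: "p x \<in> S \<Longrightarrow> first_return p S x = p x"
  unfolding first_return_def by (subst Least_equality[of _ 1]) auto

lemma first_return_later:
  assumes "p x \<notin> S" "(p ^^ k) (p x) \<in> S"
  shows "first_return p S x = first_return p S (p x)"
proof -
  have "0 < k" using assms by (cases k) auto
  have "(LEAST k. 0 < k \<and> (p ^^ k) x \<in> S) = Suc (LEAST k. 0 < k \<and> (p ^^ k) (p x) \<in> S)"
  proof (rule Least_Suc2[of _ "Suc k" _ k])
    show "\<forall>m. (0 < Suc m \<and> (p ^^ Suc m) x \<in> S) = (0 < m \<and> (p ^^ m) (p x) \<in> S)"
      using assms(1) by (simp add: funpow_Suc_right del: funpow.simps) (metis funpow_0 gr0I)
  qed (use assms \<open>0 < k\<close> in \<open>simp_all add: funpow_Suc_right del: funpow.simps\<close>)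
  then show ?thesis
    unfolding first_return_def by (simp add: funpow_Suc_right del: funpow.simps)
qed

section \<open>Face weights of tilings\<close>

definition edge_pairing :: "('e, 'v, complex ^ 'n) tiling \<Rightarrow> 'e \<Rightarrow> complex" where
  "edge_pairing X e = pairing (lab X (bv X e)) (lab X (wv X e))"

definition face_weight :: "('e, 'v, complex ^ 'n) tiling \<Rightarrow> 'e \<Rightarrow> complex" where
  "face_weight X e = edge_pairing X e / pairing (lab X (bv X e)) (lab X (wv X (facerot X e)))"

lemma face_multiratio_eq_orbit_prod:
  "face_multiratio X e = orbit_prod (facerot X) (face_weight X) e"
  unfolding face_multiratio_def orbit_prod_def orbit_len_def face_len_def face_weight_def
    edge_pairing_def prod_dividef
  by simp

lemma face_weight_eq_ratio:
  "facerot X f = b \<Longrightarrow>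
    face_weight X f = pairing (lab X (bv X f)) (lab X (wv X f)) / pairing (lab X (bv X f)) (lab X (wv X b))"
  by (simp add: face_weight_def edge_pairing_def)

context
  fixes X :: "('e, 'v, complex ^ 'n) tiling"
  assumes tiling: "is_tiling X"
begin

lemma rotW_bij: "bij_betw (rotW X) (edges X) (edges X)"
  and rotB_bij: "bij_betw (rotB X) (edges X) (edges X)"
  using tiling unfolding is_tiling_def by blast+

lemma rotW_in: "e \<in> edges X \<Longrightarrow> rotW X e \<in> edges X"
  using rotW_bij bij_betwE by blast

lemma rotB_in: "e \<in> edges X \<Longrightarrow> rotB X e \<in> edges X"
  using rotB_bij bij_betwE by blast

lemma rotW_inj: "e \<in> edges X \<Longrightarrow> f \<in> edges X \<Longrightarrow> rotW X e = rotW X f \<Longrightarrow> e = f"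
  using rotW_bij unfolding bij_betw_def inj_on_def by blast

lemma rotB_inj: "e \<in> edges X \<Longrightarrow> f \<in> edges X \<Longrightarrow> rotB X e = rotB X f \<Longrightarrow> e = f"
  using rotB_bij unfolding bij_betw_def inj_on_def by blast

lemma wv_rotW: "e \<in> edges X \<Longrightarrow> wv X (rotW X e) = wv X e"
  and bv_rotB: "e \<in> edges X \<Longrightarrow> bv X (rotB X e) = bv X e"
  using tiling unfolding is_tiling_def by blast+

lemma rotW_orbit: "e \<in> edges X \<Longrightarrow> f \<in> edges X \<Longrightarrow> wv X e = wv X f \<Longrightarrow> \<exists>k. (rotW X ^^ k) e = f"
  and rotB_orbit: "e \<in> edges X \<Longrightarrow> f \<in> edges X \<Longrightarrow> bv X e = bv X f \<Longrightarrow> \<exists>k. (rotB X ^^ k) e = f"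
  using tiling unfolding is_tiling_def by blast+

lemma rotW_two_cycle_edges:
  assumes "x \<in> edges X" "rotW X x = y" "rotW X y = x" "z \<in> edges X" "wv X z = wv X x"
  shows "z = x \<or> z = y"
proof -
  obtain k where "(rotW X ^^ k) x = z" using rotW_orbit[OF assms(1,4)] assms(5) by metis
  moreover have "(rotW X ^^ k) x \<in> {x, y}" using assms(2,3) by (induction k) auto
  ultimately show ?thesis by blast
qed

lemma rotB_two_cycle_edges:
  assumes "x \<in> edges X" "rotB X x = y" "rotB X y = x" "z \<in> edges X" "bv X z = bv X x"
  shows "z = x \<or> z = y"
proof -
  obtain k where "(rotB X ^^ k) x = z" using rotB_orbit[OF assms(1,4)] assms(5) by metis
  moreover have "(rotB X ^^ k) x \<in> {x, y}" using assms(2,3) by (induction k) auto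
  ultimately show ?thesis by blast
qed

lemma facerot_bij: "bij_betw (facerot X) (edges X) (edges X)"
  unfolding facerot_def by (rule bij_betw_trans[OF rotB_bij rotW_bij])

lemma facerot_in: "e \<in> edges X \<Longrightarrow> facerot X e \<in> edges X"
  by (simp add: facerot_def rotB_in rotW_in)

lemma funpow_facerot_in: "e \<in> edges X \<Longrightarrow> (facerot X ^^ k) e \<in> edges X"
  by (induction k) (simp_all add: facerot_in)

lemma periodic_facerot: "e \<in> edges X \<Longrightarrow> periodic (facerot X) e"
  using periodic_if_bij_betw[OF _ facerot_bij] tiling by (simp add: is_tiling_def)

lemma face_weight_eq:
  "e \<in> edges X \<Longrightarrow> face_weight X e = edge_pairing X e / edge_pairing X (rotB X e)"
  unfolding face_weight_def edge_pairing_def facerot_def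
  by (simp add: rotB_in bv_rotB wv_rotW)

lemma edge_pairing_nonzero_if_coherent:
  assumes "coherent X" "e \<in> edges X"
  shows "edge_pairing X e \<noteq> 0"
proof
  assume "edge_pairing X e = 0"
  then have "face_weight X ((facerot X ^^ 0) e) = 0" by (simp add: face_weight_def)
  moreover have "0 \<in> {..<orbit_len (facerot X) e}"
    using orbit_len_pos[OF periodic_facerot[OF assms(2)]] by simp
  ultimately have "orbit_prod (facerot X) (face_weight X) e = 0"
    unfolding orbit_prod_def by (subst prod_zero_iff) (auto intro!: bexI[of _ 0])
  then show False using assms unfolding coherent_def face_multiratio_eq_orbit_prod by simp
qed

end

lemma face_multiratio_eq_one_via_refinement:
  assumes "is_tiling T" "is_tiling T'" "coherent T"
    and "induced_on (edges T) P W (facerot T) (face_weight T)"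
    and "induced_on (edges T') P W (facerot T') (face_weight T')"
    and "e \<in> edges T'" "(P ^^ k) e \<in> edges T"
  shows "face_multiratio T' e = 1"
  using orbit_prod_common_refinement[OF assms(4-6) periodic_facerot[OF assms(2,6)] assms(7)
      periodic_facerot[OF assms(1,7)]] assms(3,7)
  unfolding coherent_def face_multiratio_eq_orbit_prod by simp

section \<open>Degree-two vertex removal\<close>

definition swap_colours :: "('e, 'v, 'x) tiling \<Rightarrow> ('e, 'v, 'x) tiling" where
  "swap_colours X = \<lparr>edges = edges X, wv = bv X, bv = wv X, rotW = rotB X, rotB = rotW X, lab = lab X\<rparr>"

lemma swap_colours_simps [simp]:
  "edges (swap_colours X) = edges X" "wv (swap_colours X) = bv X" "bv (swap_colours X) = wv X"
  "rotW (swap_colours X) = rotB X" "rotB (swap_colours X) = rotW X" "lab (swap_colours X) = lab X"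
  by (simp_all add: swap_colours_def)

lemma swap_colours_swap_colours [simp]: "swap_colours (swap_colours X) = X"
  by (simp add: swap_colours_def)

lemma swap_colours_vertices [simp]:
  "whites (swap_colours X) = blacks X" "blacks (swap_colours X) = whites X"
  "verts (swap_colours X) = verts X"
  "nbrsW (swap_colours X) = nbrsB X" "nbrsB (swap_colours X) = nbrsW X"
  unfolding whites_def blacks_def verts_def nbrsW_def nbrsB_def by auto

lemma facerot_swap_colours: "facerot (swap_colours X) = rotB X \<circ> rotW X"
  by (simp add: facerot_def)

lemma edge_pairing_swap_colours [simp]: "edge_pairing (swap_colours X) = edge_pairing X"
  by (simp add: edge_pairing_def fun_eq_iff pairing_commute)

lemma is_tiling_swap_colours: "is_tiling X \<Longrightarrow> is_tiling (swap_colours X)"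
  unfolding is_tiling_def by (simp add: Un_commute Int_commute)

lemma double_circuit_swap_colours: "double_circuit X \<Longrightarrow> double_circuit (swap_colours X)"
  unfolding double_circuit_def by (simp add: is_tiling_swap_colours)

lemma remove_black_iff_remove_white_swap_colours:
  "remove_black X Y \<longleftrightarrow> remove_white (swap_colours X) (swap_colours Y)"
  unfolding remove_black_def remove_white_def by simp

text \<open>Swapping the colours inverts the multi-ratio of every face.\<close>
lemma coherent_swap_colours:
  assumes tiling: "is_tiling X" and coherent: "coherent X"
  shows "coherent (swap_colours X)"
  unfolding coherent_def
proof
  fix e assume e: "e \<in> edges (swap_colours X)"
  have tiling': "is_tiling (swap_colours X)" by (rule is_tiling_swap_colours[OF tiling])
  have per: "periodic (rotB X \<circ> rotW X) e"
    using periodic_facerot[OF tiling' e] by (simp add: facerot_swap_colours)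
  have e': "rotW X e \<in> edges X" using rotW_in[OF tiling] e by simp
  have "face_multiratio (swap_colours X) e = orbit_prod (facerot (swap_colours X))
      (\<lambda>x. edge_pairing X x / edge_pairing X (rotW X x)) e"
    unfolding face_multiratio_eq_orbit_prod
    using face_weight_eq[OF tiling'] funpow_facerot_in[OF tiling' e]
    by (intro orbit_prod_cong) simp
  also have "\<dots> = inverse (orbit_prod (rotW X \<circ> rotB X)
      (\<lambda>x. edge_pairing X x / edge_pairing X (rotB X x)) (rotW X e))"
    unfolding facerot_swap_colours by (rule orbit_prod_ratio_swap[OF per])
  also have "\<dots> = inverse (face_multiratio X (rotW X e))"
    unfolding face_multiratio_eq_orbit_prod facerot_def[symmetric]
    using face_weight_eq[OF tiling] funpow_facerot_in[OF tiling e']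
    by (simp add: orbit_prod_cong[where w="face_weight X"])
  also have "\<dots> = 1"
    using coherent e' unfolding coherent_def by simp
  finally show "face_multiratio (swap_colours X) e = 1" .
qed

lemma circuit_pair_proportional:
  fixes f :: "'i \<Rightarrow> complex ^ 'n"
  assumes circuit: "is_circuit {u, u'} f" and "u \<noteq> u'"
  shows "\<exists>\<mu>. \<mu> \<noteq> 0 \<and> f u' = \<mu> *s f u"
proof -
  have nonzero: "f v \<noteq> 0" if "v \<in> {u, u'}" for v
  proof
    assume "f v = 0"
    then have "fam_dependent {v} f" unfolding fam_dependent_def by (intro exI[of _ "\<lambda>_. 1"]) simp
    moreover have "{v} \<subset> {u, u'}" using that \<open>u \<noteq> u'\<close> by auto
    ultimately show False using circuit unfolding is_circuit_def by blast
  qed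
  obtain c where c: "c u \<noteq> 0 \<or> c u' \<noteq> 0" "c u *s f u + c u' *s f u' = 0"
    using circuit \<open>u \<noteq> u'\<close> unfolding is_circuit_def fam_dependent_def by auto
  have "c u' \<noteq> 0" using c nonzero[of u] by auto
  moreover have "c u' *s f u' = - (c u *s f u)"
    using c(2) by (simp add: eq_neg_iff_add_eq_0 add.commute)
  ultimately have "f u' = (- c u / c u') *s f u"
    by (metis (no_types, lifting) divide_inverse_commute mult_minus_left nonzero_mult_div_cancel_left
        vector_smult_assoc vector_smult_lneg vector_smult_lid)
  moreover have "- c u / c u' \<noteq> 0" using calculation nonzero[of u'] by auto
  ultimately show ?thesis by blast
qed

locale white_removal =
  fixes X Y :: "('e, 'v, complex ^ 'n) tiling" and e1 e2 :: 'e
  assumes tiling: "is_tiling X"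
    and circuit: "is_circuit (nbrsW X (wv X e1)) (lab X)"
    and nonzero: "edge_pairing X e1 \<noteq> 0" "edge_pairing X e2 \<noteq> 0"
    and e1: "e1 \<in> edges X" and e2: "e2 \<in> edges X" and e1_ne_e2: "e1 \<noteq> e2"
    and white_edges: "{f \<in> edges X. wv X f = wv X e1} = {e1, e2}"
    and blacks_distinct: "bv X e1 \<noteq> bv X e2"
    and edges_Y: "edges Y = edges X - {e1, e2}"
    and structure_Y: "\<forall>f\<in>edges Y. wv Y f = wv X f \<and>
        bv Y f = (if bv X f = bv X e2 then bv X e1 else bv X f) \<and>
        rotW Y f = rotW X f \<and> rotB Y f = first_return (rotB X \<circ> Transposition.transpose e1 e2) (edges Y) f"
    and lab_Y: "\<forall>v\<in>verts Y. lab Y v = lab X v"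
begin

lemma white_edge_iff: "f \<in> edges X \<Longrightarrow> wv X f = wv X e1 \<longleftrightarrow> f = e1 \<or> f = e2"
  using white_edges by (simp add: set_eq_iff) (metis e1 e2)

lemma wv_e2: "wv X e2 = wv X e1"
  using white_edge_iff[OF e2] by simp

lemma rotW_e1: "rotW X e1 = e2" and rotW_e2: "rotW X e2 = e1"
proof -
  have stays: "rotW X e = e1 \<or> rotW X e = e2" if "e = e1 \<or> e = e2" for e
    using white_edge_iff[OF rotW_in[OF tiling]] wv_rotW[OF tiling] that e1 e2 wv_e2 by auto
  have moves: "rotW X e1 \<noteq> e1"
  proof
    assume fixed: "rotW X e1 = e1"
    obtain k where "(rotW X ^^ k) e1 = e2" using rotW_orbit[OF tiling e1 e2] wv_e2 by metis
    moreover have "(rotW X ^^ k) e1 = e1" using fixed by (induction k) simp_all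
    ultimately show False using e1_ne_e2 by simp
  qed
  show "rotW X e1 = e2" using stays[of e1] moves by blast
  then show "rotW X e2 = e1"
    using stays[of e2] rotW_inj[OF tiling e1 e2] e1_ne_e2 by auto
qed

lemma merged_labels_proportional:
  assumes "{a, b} = {e1, e2}"
  shows "\<exists>\<mu>. \<mu> \<noteq> 0 \<and> lab X (bv X b) = \<mu> *s lab X (bv X a)"
proof -
  have "nbrsW X (wv X e1) = {bv X a, bv X b}"
    using white_edges assms unfolding nbrsW_def by (auto simp: doubleton_eq_iff)
  then show ?thesis
    using circuit_pair_proportional[of "bv X a" "bv X b" "lab X"] circuit blacks_distinct assms
    by (auto simp: doubleton_eq_iff)
qed

lemma edges_Y_subset: "edges Y \<subseteq> edges X"
  using edges_Y by blast

lemma bv_Y: "f \<in> edges Y \<Longrightarrow> bv Y f = (if bv X f = bv X e2 then bv X e1 else bv X f)"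
  and wv_Y: "f \<in> edges Y \<Longrightarrow> wv Y f = wv X f"
  and rotW_Y: "f \<in> edges Y \<Longrightarrow> rotW Y f = rotW X f"
  and rotB_Y: "f \<in> edges Y \<Longrightarrow> rotB Y f = first_return (rotB X \<circ> Transposition.transpose e1 e2) (edges Y) f"
  using structure_Y by blast+

lemma lab_wv_Y: "f \<in> edges Y \<Longrightarrow> lab Y (wv Y f) = lab X (wv X f)"
  using wv_Y lab_Y unfolding verts_def whites_def by auto

lemma lab_bv_Y: "f \<in> edges Y \<Longrightarrow> \<exists>\<mu>. \<mu> \<noteq> 0 \<and> lab Y (bv Y f) = \<mu> *s lab X (bv X f)"
proof -
  assume f: "f \<in> edges Y"
  have lab_eq: "lab Y (bv Y f) = lab X (bv Y f)" using f lab_Y unfolding verts_def blacks_def by auto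
  obtain \<mu> where \<mu>: "\<mu> \<noteq> 0" "lab X (bv X e2) = \<mu> *s lab X (bv X e1)"
    using merged_labels_proportional[of e1 e2] by blast
  show ?thesis
  proof (cases "bv X f = bv X e2")
    case True
    then have "lab Y (bv Y f) = inverse \<mu> *s lab X (bv X f)"
      using lab_eq bv_Y[OF f] \<mu> by (simp add: vector_smult_assoc)
    then show ?thesis using \<mu>(1) by (intro exI[of _ "inverse \<mu>"]) simp
  next
    case False
    then show ?thesis using lab_eq bv_Y[OF f] by (intro exI[of _ 1]) simp
  qed
qed

lemma face_weight_Y:
  assumes "f \<in> edges Y" "facerot Y f \<in> edges Y"
  shows "face_weight Y f
    = pairing (lab X (bv X f)) (lab X (wv X f)) / pairing (lab X (bv X f)) (lab X (wv X (facerot Y f)))"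
proof -
  obtain \<mu> where "\<mu> \<noteq> 0" "lab Y (bv Y f) = \<mu> *s lab X (bv X f)" using lab_bv_Y[OF assms(1)] by blast
  then show ?thesis
    unfolding face_weight_def edge_pairing_def lab_wv_Y[OF assms(1)] lab_wv_Y[OF assms(2)]
    by (simp add: pairing_ratio_scale_left)
qed

lemma removed_pair:
  assumes "{a, b} = {e1, e2}"
  shows "a \<in> edges X" "a \<notin> edges Y" "rotW X a = b" "wv X a = wv X e1"
    "Transposition.transpose e1 e2 a = b"
    "pairing (lab X (bv X a)) (lab X (wv X e1)) \<noteq> 0"
proof -
  have ab: "a = e1 \<and> b = e2 \<or> a = e2 \<and> b = e1" using assms by (auto simp: doubleton_eq_iff)
  show "a \<in> edges X" using ab e1 e2 by auto
  show "a \<notin> edges Y" using ab edges_Y by auto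
  show "rotW X a = b" using ab rotW_e1 rotW_e2 by auto
  show "wv X a = wv X e1" using ab wv_e2 by auto
  show "Transposition.transpose e1 e2 a = b" using ab by auto
  show "pairing (lab X (bv X a)) (lab X (wv X e1)) \<noteq> 0"
    using ab nonzero wv_e2 unfolding edge_pairing_def by auto
qed

lemma rotW_not_removed:
  assumes "y \<in> edges X"
  shows "y \<notin> edges Y \<longleftrightarrow> rotW X y \<notin> edges Y"
proof -
  have "rotW X y = e1 \<longleftrightarrow> y = e2" "rotW X y = e2 \<longleftrightarrow> y = e1"
    using rotW_inj[OF tiling assms] e1 e2 rotW_e1 rotW_e2 by auto
  then show ?thesis using assms rotW_in[OF tiling assms] edges_Y by auto
qed

lemma entering_removed:
  assumes ab: "{a, b} = {e1, e2}" and f: "f \<in> edges Y" and rotB_f: "rotB X f = a"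
  shows "f \<in> edges X" "(rotB X \<circ> Transposition.transpose e1 e2) f = a" "facerot X f = b"
    "bv X f = bv X a" "face_weight X f
      = pairing (lab X (bv X a)) (lab X (wv X f)) / pairing (lab X (bv X a)) (lab X (wv X e1))"
proof -
  note a = removed_pair[OF ab] and b = removed_pair[OF ab[unfolded insert_commute[of a]]]
  show fX: "f \<in> edges X" using f edges_Y by auto
  show "(rotB X \<circ> Transposition.transpose e1 e2) f = a" using f edges_Y rotB_f by auto
  show pf: "facerot X f = b" using rotB_f a(3) by (simp add: facerot_def)
  show bv_f: "bv X f = bv X a" using bv_rotB[OF tiling fX] rotB_f by simp
  show "face_weight X f
      = pairing (lab X (bv X a)) (lab X (wv X f)) / pairing (lab X (bv X a)) (lab X (wv X e1))"
    using face_weight_eq_ratio[OF pf] bv_f b(4) by simp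
qed

text \<open>In \<open>X\<close>, a face of \<open>Y\<close> through the merged black vertex makes a detour through the
  removed white vertex, once, or twice when the other merged vertex has degree one.  The detour
  does not change the product of the weights because the labels of the two merged black vertices
  are proportional.\<close>
lemma first_hit_through_removed_once:
  assumes ab: "{a, b} = {e1, e2}" and f: "f \<in> edges Y" and rotB_f: "rotB X f = a"
    and not_leaf: "rotB X b \<noteq> b"
  shows "first_hit (edges Y) (facerot X) (face_weight X) f (facerot Y f) (face_weight Y f)"
proof -
  note a = removed_pair[OF ab] and b = removed_pair[OF ab[unfolded insert_commute[of a]]]
  note f_in = entering_removed[OF ab f rotB_f]
  define c where "c = rotB X b"
  have bv_ab: "bv X a \<noteq> bv X b" using ab blacks_distinct by (auto simp: doubleton_eq_iff)
  have c: "c \<in> edges X" "c \<in> edges Y" "bv X c = bv X b"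
    using rotB_in[OF tiling b(1)] bv_rotB[OF tiling b(1)] bv_ab not_leaf ab edges_Y
    unfolding c_def by (auto simp: doubleton_eq_iff)
  have pb: "facerot X b = rotW X c" by (simp add: facerot_def c_def)
  have "rotB Y f = c"
    using first_return_later[of _ f "edges Y" 1] first_return_now[of _ a "edges Y"]
      rotB_Y[OF f] f_in(2) a(2,5) c(2) by (simp add: c_def)
  then have fY: "facerot Y f = rotW X c" using rotW_Y[OF c(2)] by (simp add: facerot_def)
  have pcY: "rotW X c \<in> edges Y" using rotW_not_removed[OF c(1)] c(2) by blast
  obtain \<mu> where \<mu>: "\<mu> \<noteq> 0" "lab X (bv X b) = \<mu> *s lab X (bv X a)"
    using merged_labels_proportional[OF ab] by blast
  have "face_weight Y f = face_weight X f * face_weight X b"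
    using face_weight_Y[OF f] fY pcY face_weight_eq_ratio[OF pb] f_in(4,5) \<mu> a(6) b(4)
    by (simp add: pairing_scale_left)
  then show ?thesis
    using first_hit_two_steps[of "facerot X" f "edges Y"] f_in(3) b(2) pb fY pcY by simp
qed

lemma first_hit_through_removed_twice:
  assumes ab: "{a, b} = {e1, e2}" and f: "f \<in> edges Y" and rotB_f: "rotB X f = a"
    and leaf: "rotB X b = b"
  shows "first_hit (edges Y) (facerot X) (face_weight X) f (facerot Y f) (face_weight Y f)"
proof -
  note a = removed_pair[OF ab] and b = removed_pair[OF ab[unfolded insert_commute[of a]]]
  note f_in = entering_removed[OF ab f rotB_f]
  define d where "d = rotB X a"
  have bv_ab: "bv X a \<noteq> bv X b" using ab blacks_distinct by (auto simp: doubleton_eq_iff)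
  have dX: "d \<in> edges X" using rotB_in[OF tiling a(1)] unfolding d_def .
  have "d \<noteq> a"
  proof
    assume "d = a"
    then have "f = a" using rotB_inj[OF tiling f_in(1) a(1)] rotB_f unfolding d_def by simp
    then show False using f a(2) by simp
  qed
  moreover have "d \<noteq> b" using bv_rotB[OF tiling a(1)] bv_ab unfolding d_def by auto
  ultimately have d: "d \<in> edges X" "d \<in> edges Y" using dX ab edges_Y by auto
  have "rotB Y f = d"
    using first_return_later[of _ f "edges Y" 2] first_return_later[of _ a "edges Y" 1]
      first_return_now[of _ b "edges Y"] rotB_Y[OF f] f_in(2) a(2,5) b(2,5) d(2) leaf
    by (simp add: d_def numeral_2_eq_2)
  then have fY: "facerot Y f = rotW X d" using rotW_Y[OF d(2)] by (simp add: facerot_def)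
  have pdY: "rotW X d \<in> edges Y" using rotW_not_removed[OF d(1)] d(2) by blast
  have pb: "facerot X b = a" using leaf b(3) by (simp add: facerot_def)
  have pa: "facerot X a = rotW X d" by (simp add: facerot_def d_def)
  have "face_weight Y f = face_weight X f * (face_weight X b * face_weight X a)"
    using face_weight_Y[OF f] fY pdY face_weight_eq_ratio[OF pb] face_weight_eq_ratio[OF pa]
      f_in(4,5) a(4,6) b(4,6)
    by simp
  then show ?thesis
    using first_hit_three_steps[of "facerot X" f "edges Y"] f_in(3) pb pa fY pdY a(2) b(2) by simp
qed

lemma first_hit_through_removed:
  "{a, b} = {e1, e2} \<Longrightarrow> f \<in> edges Y \<Longrightarrow> rotB X f = a \<Longrightarrow>
    first_hit (edges Y) (facerot X) (face_weight X) f (facerot Y f) (face_weight Y f)"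
  using first_hit_through_removed_once first_hit_through_removed_twice by blast

lemma induced_Y: "induced_on (edges Y) (facerot X) (face_weight X) (facerot Y) (face_weight Y)"
  unfolding induced_on_def
proof
  fix f assume f: "f \<in> edges Y"
  have fX: "f \<in> edges X" and f_ne: "f \<noteq> e1" "f \<noteq> e2" using f edges_Y by auto
  show "first_hit (edges Y) (facerot X) (face_weight X) f (facerot Y f) (face_weight Y f)"
  proof (cases "rotB X f \<in> edges Y")
    case True
    have "rotB Y f = rotB X f"
      using first_return_now[of "rotB X \<circ> Transposition.transpose e1 e2" f "edges Y"]
        rotB_Y[OF f] f_ne True by simp
    then have fY: "facerot Y f = facerot X f" using rotW_Y[OF True] by (simp add: facerot_def)
    moreover have "facerot X f \<in> edges Y"
      using rotW_not_removed[OF rotB_in[OF tiling fX]] True by (simp add: facerot_def)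
    moreover have "face_weight Y f = face_weight X f"
      using face_weight_Y[OF f] fY calculation(2) face_weight_eq_ratio[of X f "facerot X f"] by simp
    ultimately show ?thesis using first_hit_step[of "facerot X" f "edges Y"] by simp
  next
    case False
    then have "rotB X f = e1 \<or> rotB X f = e2" using rotB_in[OF tiling fX] edges_Y by auto
    then show ?thesis
    proof
      assume "rotB X f = e1"
      then show ?thesis by (rule first_hit_through_removed[OF refl f])
    next
      assume "rotB X f = e2"
      then show ?thesis by (rule first_hit_through_removed[OF insert_commute f])
    qed
  qed
qed

lemma face_weight_removed: "x \<in> {e1, e2} \<Longrightarrow> facerot X x \<in> {e1, e2} \<Longrightarrow> face_weight X x = 1"
  using nonzero wv_e2 by (auto simp: face_weight_def edge_pairing_def)

lemma coherent_iff:
  assumes tiling_Y: "is_tiling Y"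
  shows "coherent X \<longleftrightarrow> coherent Y"
proof
  have induced_X: "induced_on (edges X) (facerot X) (face_weight X) (facerot X) (face_weight X)"
    by (rule induced_on_self) (rule facerot_in[OF tiling])
  {
    assume coherent_X: "coherent X"
    show "coherent Y"
      unfolding coherent_def
      using face_multiratio_eq_one_via_refinement[OF tiling tiling_Y coherent_X induced_X induced_Y,
          of _ 0] edges_Y_subset by auto
  next
    assume coherent_Y: "coherent Y"
    show "coherent X"
      unfolding coherent_def
    proof
      fix e assume e: "e \<in> edges X"
      show "face_multiratio X e = 1"
      proof (cases "\<exists>k. (facerot X ^^ k) e \<in> edges Y")
        case True
        then obtain k where "(facerot X ^^ k) e \<in> edges Y" by blast
        then show ?thesis
          by (rule face_multiratio_eq_one_via_refinement[OF tiling_Y tiling coherent_Y induced_Y induced_X e])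
      next
        case False
        then have "(facerot X ^^ i) e \<in> {e1, e2}" for i
          using funpow_facerot_in[OF tiling e] edges_Y by blast
        then have "face_weight X ((facerot X ^^ i) e) = 1" for i
          using face_weight_removed[of "(facerot X ^^ i) e"] by (metis funpow_swap1 funpow.simps(2) o_apply)
        then show ?thesis by (simp add: face_multiratio_eq_orbit_prod orbit_prod_def)
      qed
    qed
  }
qed

end

lemma coherent_remove_white:
  assumes "remove_white X Y" "double_circuit X" "is_tiling Y" "\<forall>e\<in>edges X. edge_pairing X e \<noteq> 0"
  shows "coherent X \<longleftrightarrow> coherent Y"
proof -
  have "\<exists>e1 e2. white_removal X Y e1 e2"
    using assms unfolding remove_white_def white_removal_def double_circuit_def
    by (elim exE conjE) (intro exI conjI; (assumption | simp add: whites_def))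
  then obtain e1 e2 where "white_removal X Y e1 e2" by blast
  then show ?thesis using assms(3) by (rule white_removal.coherent_iff)
qed

lemma coherent_swap_colours_iff: "is_tiling X \<Longrightarrow> coherent (swap_colours X) \<longleftrightarrow> coherent X"
  using coherent_swap_colours[of X] coherent_swap_colours[of "swap_colours X"]
    is_tiling_swap_colours[of X] by auto

lemma coherent_remove_black:
  assumes "remove_black X Y" "double_circuit X" "is_tiling Y" "\<forall>e\<in>edges X. edge_pairing X e \<noteq> 0"
  shows "coherent X \<longleftrightarrow> coherent Y"
proof -
  have "coherent (swap_colours X) \<longleftrightarrow> coherent (swap_colours Y)"
    using assms by (intro coherent_remove_white)
      (simp_all add: remove_black_iff_remove_white_swap_colours double_circuit_swap_colours
        is_tiling_swap_colours)
  moreover have "is_tiling X" using assms(2) unfolding double_circuit_def by blast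
  ultimately show ?thesis using coherent_swap_colours_iff assms(3) by blast
qed

lemma coherent_move_M1:
  assumes "move_M1 T T'" "double_circuit T" "coherent T" "double_circuit T'" "nonzero_pairings T'"
  shows "coherent T'"
proof -
  have tilings: "is_tiling T" "is_tiling T'"
    using assms(2,4) unfolding double_circuit_def by blast+
  have nonzero: "\<forall>e\<in>edges T. edge_pairing T e \<noteq> 0" "\<forall>e\<in>edges T'. edge_pairing T' e \<noteq> 0"
    using edge_pairing_nonzero_if_coherent[OF tilings(1) assms(3)] assms(5)
    unfolding nonzero_pairings_def edge_pairing_def by auto
  show ?thesis
    using assms(1-4) tilings nonzero coherent_remove_white coherent_remove_black
    unfolding move_M1_def by blast
qed

section \<open>Urban renewal\<close>

lemma pairing_ratio_on_span:
  assumes "pairing b (pairing c B *s A - pairing c A *s B) = 0" "X \<in> vec.span {A, B}"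
  shows "pairing b X * pairing c A = pairing b A * pairing c X"
proof -
  obtain s where "X - s *s A \<in> vec.span {B}" using assms(2) vec.span_breakdown_eq by blast
  then obtain t where "X - s *s A = t *s B" using vec.span_singleton by blast
  then have X: "X = s *s A + t *s B" by (simp add: algebra_simps)
  show ?thesis
    using assms(1) unfolding X
    by (simp add: pairing_add_right pairing_diff_right pairing_scale_right algebra_simps)
qed

lemma pairing_cross_ratio_on_span:
  assumes "pairing c A \<noteq> 0"
    and "pairing b (pairing c B *s A - pairing c A *s B) = 0"
    and "pairing b' (pairing c B *s A - pairing c A *s B) = 0"
    and "X \<in> vec.span {A, B}" "Y \<in> vec.span {A, B}"
  shows "pairing b X * pairing b' Y = pairing b Y * pairing b' X"
proof -
  have "(pairing b X * pairing b' Y) * (pairing c A * pairing c A)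
      = (pairing b A * pairing c X) * (pairing b' A * pairing c Y)"
    using pairing_ratio_on_span[OF assms(2,4)] pairing_ratio_on_span[OF assms(3,5)]
    by (simp add: algebra_simps)
  also have "\<dots> = (pairing b Y * pairing b' X) * (pairing c A * pairing c A)"
    using pairing_ratio_on_span[OF assms(2,5)] pairing_ratio_on_span[OF assms(3,4)]
    by (simp add: algebra_simps)
  finally show ?thesis using assms(1) by simp
qed

lemma hyp_eq_UNIV_imp_zero: "hyp l = UNIV \<Longrightarrow> l = 0"
proof -
  assume all: "hyp l = UNIV"
  have "l $ i = 0" for i
  proof -
    have "pairing l (axis i 1) = l $ i"
      unfolding pairing_def axis_def by (simp add: if_distrib cong: if_cong)
    then show ?thesis using all unfolding hyp_def by (metis UNIV_I mem_Collect_eq)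
  qed
  then show "l = 0" by (simp add: vec_eq_iff)
qed

lemma divide_times_divide_cancel:
  fixes a b c d e :: "'a::field"
  assumes "c * d = b * e" "b \<noteq> 0"
  shows "a / c * (b / d) = a / e"
proof -
  have "a / c * (b / d) = (b * a) / (b * e)" using assms(1) by (simp add: ac_simps)
  then show ?thesis using assms(2) by simp
qed

locale urban_renewal_square =
  fixes T T' :: "('e, 'v, complex ^ 'n) tiling"
    and ea eb ec ed kA kc kB kd q1 q2 q3 q4 :: 'e and A c B d g E h F :: 'v
    and wv' bv' :: "'e \<Rightarrow> 'v" and rW rB :: "'e \<Rightarrow> 'e"
  assumes tiling: "is_tiling T" and tiling': "is_tiling T'"
    and coherent: "coherent T" and nonzero': "nonzero_pairings T'"
    and eb_def: "eb = rotB T ea" and ec_def: "ec = rotW T eb" and ed_def: "ed = rotB T ec"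
    and A_def: "A = wv T ea" and c_def: "c = bv T ea" and B_def: "B = wv T ec" and d_def: "d = bv T ec"
    and ea: "ea \<in> edges T" and square: "rotW T ed = ea" and A_ne_B: "A \<noteq> B" and c_ne_d: "c \<noteq> d"
    and new_card: "card {kA, kc, kB, kd, q1, q2, q3, q4} = 8"
    and new_fresh: "{kA, kc, kB, kd, q1, q2, q3, q4} \<inter> edges T = {}"
    and edges_T': "edges T' = (edges T - {ea, eb, ec, ed}) \<union> {kA, kc, kB, kd, q1, q2, q3, q4}"
    and wv'_def: "wv' = (wv T)(kA := A, kc := E, kB := B, kd := F, q1 := E, q2 := E, q3 := F, q4 := F)"
    and bv'_def: "bv' = (bv T)(kA := g, kc := c, kB := h, kd := d, q1 := g, q2 := h, q3 := h, q4 := g)"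
    and rW_def: "rW = (merge2 (merge2 (rotW T) ed ea kA) eb ec kB)
                   (kc := q1, q1 := q2, q2 := kc, q4 := kd, kd := q3, q3 := q4)"
    and rB_def: "rB = (merge2 (merge2 (rotB T) ea eb kc) ec ed kd)
                   (kA := q4, q4 := q1, q1 := kA, q2 := q3, q3 := kB, kB := q2)"
    and structure_T': "\<forall>f\<in>edges T'. wv T' f = wv' f \<and> bv T' f = bv' f \<and> rotW T' f = rW f \<and> rotB T' f = rB f"
    and lab_T': "\<forall>v\<in>verts T. lab T' v = lab T v"
    and lab_E: "lab T' E \<noteq> 0"
    and span_E: "vec.span {lab T' E} = vec.span {lab T A, lab T B} \<inter> vec.span (lab T ` (nbrsB T c - {A, B}))"
    and lab_F: "lab T' F \<noteq> 0"
    and span_F: "vec.span {lab T' F} = vec.span {lab T A, lab T B} \<inter> vec.span (lab T ` (nbrsB T d - {A, B}))"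
    and lab_g: "lab T' g \<noteq> 0"
    and hyp_g: "hyp (lab T' g) = vec.span ((hyp (lab T c) \<inter> hyp (lab T d)) \<union>
                                    \<Inter> (hyp ` lab T ` (nbrsW T A - {c, d})))"
    and lab_h: "lab T' h \<noteq> 0"
    and hyp_h: "hyp (lab T' h) = vec.span ((hyp (lab T c) \<inter> hyp (lab T d)) \<union>
                                    \<Inter> (hyp ` lab T ` (nbrsW T B - {c, d})))"
begin

lemma old_edges: "eb \<in> edges T" "ec \<in> edges T" "ed \<in> edges T"
  using rotB_in[OF tiling] rotW_in[OF tiling] ea eb_def ec_def ed_def by auto

lemma old_ends:
  "wv T ea = A" "wv T eb = B" "wv T ec = B" "wv T ed = A"
  "bv T ea = c" "bv T eb = c" "bv T ec = d" "bv T ed = d"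
  using A_def B_def c_def d_def wv_rotW[OF tiling] bv_rotB[OF tiling] ea old_edges square
    eb_def ec_def ed_def by metis+

lemma old_distinct: "distinct [ea, eb, ec, ed]"
  using old_ends A_ne_B c_ne_d by auto

lemma facerot_square: "facerot T ea = ec" "facerot T ec = ea"
  using eb_def ec_def ed_def square by (simp_all add: facerot_def)

lemma new_distinct: "distinct [kA, kc, kB, kd, q1, q2, q3, q4]"
  by (rule card_distinct) (use new_card in simp)

lemma new_not_old:
  "x \<in> edges T \<Longrightarrow> x \<noteq> kA \<and> x \<noteq> kc \<and> x \<noteq> kB \<and> x \<noteq> kd \<and> x \<noteq> q1 \<and> x \<noteq> q2 \<and> x \<noteq> q3 \<and> x \<noteq> q4"
  using new_fresh by auto

text \<open>The new labels can only be well defined if every corner of the square has a neighbour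
  outside the square.\<close>
lemma other_neighbours:
  "\<exists>x\<in>edges T. wv T x = A \<and> bv T x \<noteq> c \<and> bv T x \<noteq> d"
  "\<exists>x\<in>edges T. wv T x = B \<and> bv T x \<noteq> c \<and> bv T x \<noteq> d"
  "\<exists>x\<in>edges T. bv T x = c \<and> wv T x \<noteq> A \<and> wv T x \<noteq> B"
  "\<exists>x\<in>edges T. bv T x = d \<and> wv T x \<noteq> A \<and> wv T x \<noteq> B"
proof -
  have "nbrsW T A - {c, d} \<noteq> {}"
    using hyp_g lab_g hyp_eq_UNIV_imp_zero by fastforce
  then show "\<exists>x\<in>edges T. wv T x = A \<and> bv T x \<noteq> c \<and> bv T x \<noteq> d" unfolding nbrsW_def by auto
  have "nbrsW T B - {c, d} \<noteq> {}"
    using hyp_h lab_h hyp_eq_UNIV_imp_zero by fastforce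
  then show "\<exists>x\<in>edges T. wv T x = B \<and> bv T x \<noteq> c \<and> bv T x \<noteq> d" unfolding nbrsW_def by auto
  have "nbrsB T c - {A, B} \<noteq> {}"
    using span_E lab_E vec.span_base[of "lab T' E" "{lab T' E}"] by fastforce
  then show "\<exists>x\<in>edges T. bv T x = c \<and> wv T x \<noteq> A \<and> wv T x \<noteq> B" unfolding nbrsB_def by auto
  have "nbrsB T d - {A, B} \<noteq> {}"
    using span_F lab_F vec.span_base[of "lab T' F" "{lab T' F}"] by fastforce
  then show "\<exists>x\<in>edges T. bv T x = d \<and> wv T x \<noteq> A \<and> wv T x \<noteq> B" unfolding nbrsB_def by auto
qed

lemma rotations_leave_square:
  "rotW T ea \<noteq> ed" "rotW T ec \<noteq> eb" "rotB T eb \<noteq> ea" "rotB T ed \<noteq> ec"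
proof -
  note ends = old_ends and edges = ea old_edges
  show "rotW T ea \<noteq> ed"
    using rotW_two_cycle_edges[OF tiling ea _ square] other_neighbours(1) ends by force
  show "rotW T ec \<noteq> eb"
    using rotW_two_cycle_edges[OF tiling edges(3) _ ec_def[symmetric]] other_neighbours(2) ends by force
  show "rotB T eb \<noteq> ea"
    using rotB_two_cycle_edges[OF tiling ea eb_def[symmetric]] other_neighbours(3) ends by force
  show "rotB T ed \<noteq> ec"
    using rotB_two_cycle_edges[OF tiling edges(3) ed_def[symmetric]] other_neighbours(4) ends by force
qed

definition next_A where "next_A = rotW T ea"
definition next_B where "next_B = rotW T ec"
definition next_c where "next_c = rotB T eb"
definition next_d where "next_d = rotB T ed"
definition prev_c where "prev_c = inv_into (edges T) (rotB T) ea"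
definition prev_d where "prev_d = inv_into (edges T) (rotB T) ec"

lemma neighbour_edges:
  "next_A \<in> edges T" "next_B \<in> edges T" "next_c \<in> edges T" "next_d \<in> edges T"
  "prev_c \<in> edges T" "prev_d \<in> edges T"
  "wv T next_A = A" "wv T next_B = B" "bv T next_c = c" "bv T next_d = d"
  "rotB T prev_c = ea" "rotB T prev_d = ec" "bv T prev_c = c" "bv T prev_d = d"
proof -
  have surj: "rotB T ` edges T = edges T" using rotB_bij[OF tiling] by (simp add: bij_betw_def)
  show "prev_c \<in> edges T" "rotB T prev_c = ea" "prev_d \<in> edges T" "rotB T prev_d = ec"
    unfolding prev_c_def prev_d_def using ea old_edges surj
    by (auto intro: inv_into_into f_inv_into_f)
  then show "bv T prev_c = c" "bv T prev_d = d"
    using bv_rotB[OF tiling] old_ends by metis+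
  show "next_A \<in> edges T" "next_B \<in> edges T" "next_c \<in> edges T" "next_d \<in> edges T"
    unfolding next_A_def next_B_def next_c_def next_d_def
    using ea old_edges rotW_in[OF tiling] rotB_in[OF tiling] by auto
  show "wv T next_A = A" "wv T next_B = B" "bv T next_c = c" "bv T next_d = d"
    unfolding next_A_def next_B_def next_c_def next_d_def
    using ea old_edges old_ends wv_rotW[OF tiling] bv_rotB[OF tiling] by auto
qed

lemma neighbour_edges_not_old:
  "next_A \<notin> {ea, eb, ec, ed}" "next_B \<notin> {ea, eb, ec, ed}"
  "next_c \<notin> {ea, eb, ec, ed}" "next_d \<notin> {ea, eb, ec, ed}"
  "prev_c \<notin> {ea, eb, ec, ed}" "prev_d \<notin> {ea, eb, ec, ed}" "prev_c \<noteq> prev_d"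
proof -
  note ends = old_ends neighbour_edges(7-14) and distinct = old_distinct A_ne_B c_ne_d
  have "next_A \<noteq> ea"
    using rotW_two_cycle_edges[OF tiling ea _ _ old_edges(3)] ends distinct
    unfolding next_A_def by fastforce
  moreover have "next_B \<noteq> ec"
    using rotW_two_cycle_edges[OF tiling old_edges(2) _ _ old_edges(1)] ends distinct
    unfolding next_B_def by fastforce
  moreover have "next_c \<noteq> eb"
  proof
    assume "next_c = eb"
    then have "rotB T eb = rotB T ea" using eb_def next_c_def by simp
    then show False using rotB_inj[OF tiling old_edges(1) ea] distinct by simp
  qed
  moreover have "next_d \<noteq> ed"
  proof
    assume "next_d = ed"
    then have "rotB T ed = rotB T ec" using ed_def next_d_def by simp
    then show False using rotB_inj[OF tiling old_edges(3,2)] distinct by simp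
  qed
  moreover have "prev_c \<noteq> eb" "prev_d \<noteq> ed"
    using neighbour_edges(11,12) rotations_leave_square(3,4) unfolding next_c_def by auto
  moreover have "prev_c \<noteq> ea" "prev_d \<noteq> ec"
    using neighbour_edges(11,12) distinct eb_def ed_def by auto
  ultimately show "next_A \<notin> {ea, eb, ec, ed}" "next_B \<notin> {ea, eb, ec, ed}"
    "next_c \<notin> {ea, eb, ec, ed}" "next_d \<notin> {ea, eb, ec, ed}"
    "prev_c \<notin> {ea, eb, ec, ed}" "prev_d \<notin> {ea, eb, ec, ed}" "prev_c \<noteq> prev_d"
    using ends distinct rotations_leave_square unfolding next_A_def next_B_def next_c_def next_d_def
    by auto
qed

lemma facerot_neighbours:
  "facerot T prev_c = next_A" "facerot T prev_d = next_B"
  "facerot T eb = rotW T next_c" "facerot T ed = rotW T next_d"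
  using neighbour_edges(11,12)
  by (simp_all add: facerot_def next_A_def next_B_def next_c_def next_d_def)

abbreviation pair :: "'v \<Rightarrow> 'v \<Rightarrow> complex" where
  "pair b X \<equiv> pairing (lab T' b) (lab T' X)"

lemma lab_old: "x \<in> edges T \<Longrightarrow> lab T (wv T x) = lab T' (wv T x) \<and> lab T (bv T x) = lab T' (bv T x)"
  using lab_T' unfolding verts_def whites_def blacks_def by auto

lemma lab_corners: "lab T A = lab T' A" "lab T B = lab T' B" "lab T c = lab T' c" "lab T d = lab T' d"
  using lab_old[OF ea] lab_old[OF old_edges(2)] old_ends by auto

lemma face_weight_T:
  "x \<in> edges T \<Longrightarrow> face_weight T x = pair (bv T x) (wv T x) / pair (bv T x) (wv T (facerot T x))"
  using lab_old facerot_in[OF tiling] by (simp add: face_weight_def edge_pairing_def)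

lemma square_pairings_nonzero: "pair c A \<noteq> 0" "pair c B \<noteq> 0" "pair d B \<noteq> 0" "pair d A \<noteq> 0"
  using edge_pairing_nonzero_if_coherent[OF tiling coherent] ea old_edges old_ends lab_old
  unfolding edge_pairing_def by metis+

lemma square_coherent: "pair c A * pair d B = pair c B * pair d A"
proof -
  have "orbit_prod (facerot T) (face_weight T) ea = face_weight T ea * face_weight T ec"
    by (rule orbit_prod_two_cycle[OF facerot_square]) (use old_distinct in simp)
  then have "face_weight T ea * face_weight T ec = 1"
    using coherent ea unfolding coherent_def face_multiratio_eq_orbit_prod by simp
  then have "(pair c A / pair c B) * (pair d B / pair d A) = 1"
    using face_weight_T[OF ea] face_weight_T[OF old_edges(2)] facerot_square old_ends by simp
  then show ?thesis using square_pairings_nonzero by (simp add: field_simps)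
qed

lemma cross_ratios:
  assumes "b \<in> {c, d, g, h}" "b' \<in> {c, d, g, h}" "X \<in> {A, B, E, F}" "Y \<in> {A, B, E, F}"
  shows "pair b X * pair b' Y = pair b Y * pair b' X"
proof -
  define w where "w = pair c B *s lab T' A - pair c A *s lab T' B"
  have w_cd: "w \<in> hyp (lab T c) \<inter> hyp (lab T d)"
    using square_coherent unfolding hyp_def w_def lab_corners
    by (simp add: pairing_diff_right pairing_scale_right algebra_simps)
  have "w \<in> hyp (lab T' g)" "w \<in> hyp (lab T' h)"
    unfolding hyp_g hyp_h using w_cd by (simp_all add: vec.span_base)
  then have vanish: "pairing (lab T' b) w = 0" if "b \<in> {c, d, g, h}" for b
    using that w_cd unfolding hyp_def lab_corners by auto
  have "lab T' E \<in> vec.span {lab T' A, lab T' B}" "lab T' F \<in> vec.span {lab T' A, lab T' B}"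
    using span_E span_F vec.span_base[of "lab T' E" "{lab T' E}"] vec.span_base[of "lab T' F" "{lab T' F}"]
    unfolding lab_corners by auto
  then have on_line: "lab T' X \<in> vec.span {lab T' A, lab T' B}" if "X \<in> {A, B, E, F}" for X
    using that by (auto intro: vec.span_base)
  show ?thesis
    by (rule pairing_cross_ratio_on_span[OF square_pairings_nonzero(1)])
      (use assms vanish on_line in \<open>simp_all add: w_def\<close>)
qed

lemma new_edges_not_T: "kA \<notin> edges T" "kc \<notin> edges T" "kB \<notin> edges T" "kd \<notin> edges T"
  "q1 \<notin> edges T" "q2 \<notin> edges T" "q3 \<notin> edges T" "q4 \<notin> edges T"
  using new_fresh by auto

lemma new_edges_T': "kA \<in> edges T'" "kc \<in> edges T'" "kB \<in> edges T'" "kd \<in> edges T'"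
  "q1 \<in> edges T'" "q2 \<in> edges T'" "q3 \<in> edges T'" "q4 \<in> edges T'"
  using edges_T' by auto

lemma old_edges_T': "x \<in> edges T \<Longrightarrow> x \<notin> {ea, eb, ec, ed} \<Longrightarrow> x \<in> edges T'"
  using edges_T' by auto

lemma edges_T'_cases:
  "x \<in> edges T' \<Longrightarrow> x \<in> edges T \<and> x \<notin> {ea, eb, ec, ed} \<or> x \<in> {kA, kc, kB, kd, q1, q2, q3, q4}"
  using edges_T' by auto

lemma new_ends:
  "wv' kA = A" "wv' kc = E" "wv' kB = B" "wv' kd = F" "wv' q1 = E" "wv' q2 = E" "wv' q3 = F" "wv' q4 = F"
  "bv' kA = g" "bv' kc = c" "bv' kB = h" "bv' kd = d" "bv' q1 = g" "bv' q2 = h" "bv' q3 = h" "bv' q4 = g"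
  using new_distinct by (simp_all add: wv'_def bv'_def)

lemma old_ends_T': "x \<in> edges T \<Longrightarrow> wv' x = wv T x \<and> bv' x = bv T x"
  using new_not_old by (simp add: wv'_def bv'_def)

lemma rB_old: "x \<in> edges T \<Longrightarrow> rB x = (if rotB T x = ea then kc else if rotB T x = ec then kd else rotB T x)"
  using new_not_old[of x] new_not_old[OF ea] new_not_old[OF old_edges(2)]
  by (auto simp: rB_def merge2_def)

lemma rW_old: "x \<in> edges T \<Longrightarrow> rW x = (if rotW T x = ed then kA else if rotW T x = eb then kB else rotW T x)"
  using new_not_old[of x] new_not_old[OF old_edges(1)] new_not_old[OF old_edges(3)]
  by (auto simp: rW_def merge2_def)

lemma rB_new: "rB kA = q4" "rB q4 = q1" "rB q1 = kA" "rB q2 = q3" "rB q3 = kB" "rB kB = q2"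
  "rB kc = next_c" "rB kd = next_d"
  using new_distinct new_not_old[OF ea] new_not_old[OF old_edges(1)] new_not_old[OF old_edges(2)]
    new_not_old[OF old_edges(3)] rotations_leave_square neighbour_edges_not_old
  by (auto simp: rB_def merge2_def next_c_def next_d_def)

lemma rW_new: "rW kc = q1" "rW q1 = q2" "rW q2 = kc" "rW q4 = kd" "rW kd = q3" "rW q3 = q4"
  "rW kA = next_A" "rW kB = next_B"
  using new_distinct new_not_old[OF ea] new_not_old[OF old_edges(1)] new_not_old[OF old_edges(2)]
    new_not_old[OF old_edges(3)] rotations_leave_square neighbour_edges_not_old
  by (auto simp: rW_def merge2_def next_A_def next_B_def)

definition reroute :: "'e \<Rightarrow> 'e" where
  "reroute y = (if y = ed then kA else if y = eb then kB else y)"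

lemma facerot_T'_eq: "x \<in> edges T' \<Longrightarrow> rB x \<in> edges T' \<Longrightarrow> facerot T' x = rW (rB x)"
  using structure_T' by (simp add: facerot_def)

lemma neighbour_edges_T':
  "next_A \<in> edges T'" "next_B \<in> edges T'" "next_c \<in> edges T'" "next_d \<in> edges T'"
  "prev_c \<in> edges T'" "prev_d \<in> edges T'"
  using old_edges_T' neighbour_edges(1-6) neighbour_edges_not_old(1-6) by auto

lemma facerot_T'_new:
  "facerot T' kA = kd" "facerot T' kB = kc" "facerot T' q1 = next_A" "facerot T' q3 = next_B"
  "facerot T' q2 = q4" "facerot T' q4 = q2" "facerot T' prev_c = q1" "facerot T' prev_d = q3"
  "facerot T' kc = reroute (facerot T eb)" "facerot T' kd = reroute (facerot T ed)"
proof -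
  have rB_prev: "rB prev_c = kc" "rB prev_d = kd"
    using rB_old[OF neighbour_edges(5)] rB_old[OF neighbour_edges(6)] neighbour_edges(11,12)
      old_distinct by auto
  show "facerot T' kA = kd" "facerot T' kB = kc" "facerot T' q1 = next_A" "facerot T' q3 = next_B"
    "facerot T' q2 = q4" "facerot T' q4 = q2" "facerot T' prev_c = q1" "facerot T' prev_d = q3"
    using facerot_T'_eq rB_new rW_new rB_prev new_edges_T' neighbour_edges_T' by simp_all
  show "facerot T' kc = reroute (facerot T eb)" "facerot T' kd = reroute (facerot T ed)"
    using facerot_T'_eq rB_new rW_old neighbour_edges(3,4) new_edges_T' neighbour_edges_T'
      facerot_neighbours by (simp_all add: reroute_def)
qed

lemma facerot_T'_old:
  assumes x: "x \<in> edges T" "x \<notin> {ea, eb, ec, ed, prev_c, prev_d}"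
  shows "facerot T' x = reroute (facerot T x)"
proof -
  have "rotB T x \<noteq> ea" "rotB T x \<noteq> ec"
    using rotB_inj[OF tiling x(1) neighbour_edges(5)] rotB_inj[OF tiling x(1) neighbour_edges(6)]
      neighbour_edges(11,12) x(2) by auto
  moreover have "rotB T x \<noteq> eb" "rotB T x \<noteq> ed"
    using rotB_inj[OF tiling x(1) ea] rotB_inj[OF tiling x(1) old_edges(2)] x(2) eb_def ed_def by auto
  ultimately have "rB x = rotB T x" "rotB T x \<in> edges T'"
    using rB_old[OF x(1)] old_edges_T'[OF rotB_in[OF tiling x(1)]] by auto
  then show ?thesis
    using facerot_T'_eq[OF old_edges_T'[OF x(1)]] x rW_old[OF rotB_in[OF tiling x(1)]]
    by (simp add: reroute_def facerot_def)
qed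

text \<open>A common refinement of the face permutations of \<open>T\<close> and \<open>T'\<close> on the union of their
  edge sets: the faces of both tilings are obtained from its cycles by skipping the edges of the
  other tiling.\<close>
definition refine :: "'e \<Rightarrow> 'e" where
  "refine x = (if x = eb then kB else if x = ed then kA else if x = kB then kc
     else if x = kc then facerot T eb else if x = kA then kd else if x = kd then facerot T ed
     else if x = q1 then next_A else if x = q3 then next_B else if x = q2 then q4 else if x = q4 then q2
     else if x = prev_c then q1 else if x = prev_d then q3 else facerot T x)"

definition white :: "'e \<Rightarrow> 'v" where
  "white x = (if x \<in> edges T then wv T x else wv' x)"

definition black :: "'e \<Rightarrow> 'v" where
  "black x = (if x \<in> edges T then bv T x else bv' x)"

definition weight :: "'e \<Rightarrow> complex" where
  "weight x = pair (black x) (white x) / pair (black x) (white (refine x))"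

lemma refine_simps:
  "refine eb = kB" "refine ed = kA" "refine kB = kc" "refine kc = facerot T eb"
  "refine kA = kd" "refine kd = facerot T ed" "refine q1 = next_A" "refine q3 = next_B"
  "refine q2 = q4" "refine q4 = q2" "refine prev_c = q1" "refine prev_d = q3"
  using new_distinct new_not_old[OF old_edges(1)] new_not_old[OF old_edges(3)]
    new_not_old[OF neighbour_edges(5)] new_not_old[OF neighbour_edges(6)]
    old_distinct neighbour_edges_not_old(5-7)
  by (auto simp: refine_def)

lemma refine_old:
  "x \<in> edges T \<Longrightarrow> x \<notin> {eb, ed, prev_c, prev_d} \<Longrightarrow> refine x = facerot T x"
  using new_not_old by (auto simp: refine_def)

lemma black_white_T: "x \<in> edges T \<Longrightarrow> black x = bv T x \<and> white x = wv T x"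
  by (simp add: black_def white_def)

lemma black_white_T': "x \<in> edges T' \<Longrightarrow> black x = bv T' x \<and> white x = wv T' x"
  using edges_T'_cases[of x] structure_T' old_ends_T' new_fresh
  by (auto simp: black_def white_def)

lemma black_white_new:
  "white kA = A" "white kc = E" "white kB = B" "white kd = F" "white q1 = E" "white q2 = E"
  "white q3 = F" "white q4 = F" "black kA = g" "black kc = c" "black kB = h" "black kd = d"
  "black q1 = g" "black q2 = h" "black q3 = h" "black q4 = g"
  using new_ends new_fresh by (auto simp: black_def white_def)

lemma face_weight_T_black_white:
  "x \<in> edges T \<Longrightarrow> face_weight T x = pair (black x) (white x) / pair (black x) (white (facerot T x))"
  using face_weight_T black_white_T facerot_in[OF tiling] by simp

lemma face_weight_T'_black_white:
  "x \<in> edges T' \<Longrightarrow> face_weight T' x = pair (black x) (white x) / pair (black x) (white (facerot T' x))"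
  using black_white_T' facerot_in[OF tiling'] by (simp add: face_weight_def edge_pairing_def)

lemma weight_detour: "weight eb = 1" "weight ed = 1"
  using square_pairings_nonzero black_white_T old_edges old_ends black_white_new
  by (simp_all add: weight_def refine_simps)

lemma new_pairings_nonzero:
  "pair g A \<noteq> 0" "pair c E \<noteq> 0" "pair h B \<noteq> 0" "pair d F \<noteq> 0"
  "pair g E \<noteq> 0" "pair h E \<noteq> 0" "pair h F \<noteq> 0" "pair g F \<noteq> 0"
  using nonzero' new_edges_T' black_white_T' black_white_new
  unfolding nonzero_pairings_def by metis+

lemma pairing_after_square_nonzero:
  "pair c (wv T (facerot T eb)) \<noteq> 0" "pair d (wv T (facerot T ed)) \<noteq> 0"
  using edge_pairing_nonzero_if_coherent[OF tiling coherent] neighbour_edges lab_old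
    wv_rotW[OF tiling] rotW_in[OF tiling] facerot_neighbours
  unfolding edge_pairing_def by metis+

lemma first_hit_T_square_sides:
  "first_hit (edges T) refine weight eb (facerot T eb) (face_weight T eb)"
  "first_hit (edges T) refine weight ed (facerot T ed) (face_weight T ed)"
proof -
  note ends = black_white_T old_ends neighbour_edges and nonzero = new_pairings_nonzero
  note new = black_white_new new_edges_not_T refine_simps
  have "pair h B * pair c E = pair h E * pair c B" by (rule cross_ratios) simp_all
  then have "face_weight T eb = weight eb * (weight kB * weight kc)"
    using face_weight_T_black_white ends old_edges new nonzero pairing_after_square_nonzero
      weight_detour by (simp add: weight_def field_simps)
  then show "first_hit (edges T) refine weight eb (facerot T eb) (face_weight T eb)"
    using first_hit_three_steps[of refine eb "edges T" weight] new old_edges facerot_in[OF tiling]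
    by simp
  have "pair g A * pair d F = pair g F * pair d A" by (rule cross_ratios) simp_all
  then have "face_weight T ed = weight ed * (weight kA * weight kd)"
    using face_weight_T_black_white ends old_edges new nonzero pairing_after_square_nonzero
      weight_detour by (simp add: weight_def field_simps)
  then show "first_hit (edges T) refine weight ed (facerot T ed) (face_weight T ed)"
    using first_hit_three_steps[of refine ed "edges T" weight] new old_edges facerot_in[OF tiling]
    by simp
qed

lemma first_hit_T_before_square:
  "first_hit (edges T) refine weight prev_c (facerot T prev_c) (face_weight T prev_c)"
  "first_hit (edges T) refine weight prev_d (facerot T prev_d) (face_weight T prev_d)"
proof -
  note ends = black_white_T old_ends neighbour_edges and nonzero = new_pairings_nonzero
  note new = black_white_new new_edges_not_T refine_simps
  have "pair c E * pair g A = pair g E * pair c A"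
    using cross_ratios[of c g E A] by (simp add: mult.commute)
  then have "face_weight T prev_c = weight prev_c * weight q1"
    using face_weight_T_black_white ends new nonzero facerot_neighbours
    by (simp add: weight_def divide_times_divide_cancel)
  then show "first_hit (edges T) refine weight prev_c (facerot T prev_c) (face_weight T prev_c)"
    using first_hit_two_steps[of refine prev_c "edges T" weight] new neighbour_edges
      facerot_neighbours by simp
  have "pair d F * pair h B = pair h F * pair d B"
    using cross_ratios[of d h F B] by (simp add: mult.commute)
  then have "face_weight T prev_d = weight prev_d * weight q3"
    using face_weight_T_black_white ends new nonzero facerot_neighbours
    by (simp add: weight_def divide_times_divide_cancel)
  then show "first_hit (edges T) refine weight prev_d (facerot T prev_d) (face_weight T prev_d)"
    using first_hit_two_steps[of refine prev_d "edges T" weight] new neighbour_edges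
      facerot_neighbours by simp
qed

lemma induced_T: "induced_on (edges T) refine weight (facerot T) (face_weight T)"
  unfolding induced_on_def
proof
  fix x assume x: "x \<in> edges T"
  show "first_hit (edges T) refine weight x (facerot T x) (face_weight T x)"
  proof (cases "x \<in> {eb, ed, prev_c, prev_d}")
    case True
    then show ?thesis using first_hit_T_square_sides first_hit_T_before_square by auto
  next
    case False
    then have "refine x = facerot T x" by (rule refine_old[OF x])
    then show ?thesis
      using first_hit_step[of refine x "edges T" weight] face_weight_T_black_white[OF x]
        facerot_in[OF tiling x] black_white_T by (simp add: weight_def)
  qed
qed

lemma reroute_cases:
  assumes "y \<in> edges T" "y \<noteq> ea" "y \<noteq> ec"
  shows "reroute y = y \<and> y \<in> edges T' \<or> y = eb \<and> reroute y = kB \<or> y = ed \<and> reroute y = kA"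
  using assms old_edges_T' old_distinct by (auto simp: reroute_def)

lemma facerot_not_square:
  assumes "x \<in> edges T" "x \<noteq> ea" "x \<noteq> ec"
  shows "facerot T x \<noteq> ea" "facerot T x \<noteq> ec"
  using facerot_bij[OF tiling] assms ea old_edges(2) facerot_square
  unfolding bij_betw_def inj_on_def by metis+

lemma facerot_T'_refine:
  assumes x: "x \<in> edges T'"
  shows "refine x \<in> edges T' \<and> facerot T' x = refine x \<or>
    refine x = eb \<and> facerot T' x = kB \<or> refine x = ed \<and> facerot T' x = kA"
proof -
  note simps = refine_simps facerot_T'_new new_edges_T' neighbour_edges_T'
  have after_square: "facerot T eb \<noteq> ea \<and> facerot T eb \<noteq> ec \<and> facerot T ed \<noteq> ea \<and> facerot T ed \<noteq> ec"
    using facerot_not_square[OF old_edges(1)] facerot_not_square[OF old_edges(3)] old_distinct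
    by auto
  consider "x \<in> edges T" "x \<notin> {ea, eb, ec, ed, prev_c, prev_d}" | "x \<in> {prev_c, prev_d}"
    | "x \<in> {kA, kB, q1, q2, q3, q4}" | "x = kc" | "x = kd"
    using edges_T'_cases[OF x] by blast
  then show ?thesis
  proof cases
    case 1
    then show ?thesis
      using reroute_cases[OF facerot_in[OF tiling] facerot_not_square] refine_old facerot_T'_old
      by auto
  next
    case 4
    then show ?thesis
      using reroute_cases[OF facerot_in[OF tiling old_edges(1)]] after_square simps by auto
  next
    case 5
    then show ?thesis
      using reroute_cases[OF facerot_in[OF tiling old_edges(3)]] after_square simps by auto
  qed (use simps in auto)
qed

lemma induced_T': "induced_on (edges T') refine weight (facerot T') (face_weight T')"
  unfolding induced_on_def
proof
  fix x assume x: "x \<in> edges T'"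
  have detour_ends: "white eb = white kB" "white ed = white kA" "eb \<notin> edges T'" "ed \<notin> edges T'"
    using black_white_T old_edges old_ends black_white_new edges_T' new_edges_not_T old_distinct
    by auto
  note fw = face_weight_T'_black_white[OF x] and weight = weight_def[of x]
  from facerot_T'_refine[OF x]
  show "first_hit (edges T') refine weight x (facerot T' x) (face_weight T' x)"
  proof (elim disjE conjE)
    assume "refine x \<in> edges T'" "facerot T' x = refine x"
    then show ?thesis using first_hit_step[of refine x "edges T'" weight] fw weight by simp
  next
    assume "refine x = eb" "facerot T' x = kB"
    then show ?thesis
      using first_hit_two_steps[of refine x "edges T'" weight] fw weight detour_ends weight_detour
        refine_simps new_edges_T' by simp
  next
    assume "refine x = ed" "facerot T' x = kA"
    then show ?thesis
      using first_hit_two_steps[of refine x "edges T'" weight] fw weight detour_ends weight_detour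
        refine_simps new_edges_T' by simp
  qed
qed

lemma inner_square_coherent: "face_weight T' q2 * face_weight T' q4 = 1"
proof -
  have "pair h E * pair g F = pair h F * pair g E" by (rule cross_ratios) simp_all
  then show ?thesis
    using face_weight_T'_black_white new_edges_T' facerot_T'_new black_white_new new_pairings_nonzero
    by (simp add: field_simps)
qed

lemma refine_reaches_T:
  assumes "x \<in> edges T'" "x \<notin> {q2, q4}"
  shows "\<exists>k. (refine ^^ k) x \<in> edges T"
proof -
  consider "x \<in> edges T" | "x \<in> {kc, kd, q1, q3}" | "x \<in> {kA, kB}"
    using edges_T'_cases[OF assms(1)] assms(2) by blast
  then show ?thesis
  proof cases
    case 1
    then show ?thesis by (intro exI[of _ 0]) simp
  next
    case 2
    then have "refine x \<in> edges T"
      using refine_simps(4,6-8) facerot_in[OF tiling old_edges(1)] facerot_in[OF tiling old_edges(3)]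
        neighbour_edges(1,2) by auto
    then show ?thesis by (intro exI[of _ "Suc 0"]) (simp only: funpow.simps o_apply id_apply)
  next
    case 3
    then have "refine (refine x) \<in> edges T"
      using refine_simps(3-6) facerot_in[OF tiling old_edges(1)] facerot_in[OF tiling old_edges(3)]
      by auto
    then show ?thesis
      by (intro exI[of _ "Suc (Suc 0)"]) (simp only: funpow.simps o_apply id_apply)
  qed
qed

lemma coherent_T': "coherent T'"
  unfolding coherent_def
proof
  fix e assume e: "e \<in> edges T'"
  show "face_multiratio T' e = 1"
  proof (cases "e \<in> {q2, q4}")
    case True
    have "q2 \<noteq> q4" using new_distinct by simp
    then have "face_multiratio T' q2 = 1" "face_multiratio T' q4 = 1"
      using orbit_prod_two_cycle[of "facerot T'" q2 q4 "face_weight T'"]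
        orbit_prod_two_cycle[of "facerot T'" q4 q2 "face_weight T'"]
        facerot_T'_new(5,6) inner_square_coherent
      by (simp_all add: face_multiratio_eq_orbit_prod mult.commute)
    then show ?thesis using True by auto
  next
    case False
    then obtain k where "(refine ^^ k) e \<in> edges T" using refine_reaches_T[OF e] by blast
    then show ?thesis
      by (rule face_multiratio_eq_one_via_refinement[OF tiling tiling' coherent induced_T induced_T' e])
  qed
qed

end

lemma coherent_urban_renewal:
  assumes "urban_renewal T T'" "double_circuit T" "coherent T" "double_circuit T'" "nonzero_pairings T'"
  shows "coherent T'"
proof -
  have "\<exists>ea eb ec ed kA kc kB kd q1 q2 q3 q4 A c B d g E h F wv' bv' rW rB.
      urban_renewal_square T T' ea eb ec ed kA kc kB kd q1 q2 q3 q4 A c B d g E h F wv' bv' rW rB"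
    using assms unfolding urban_renewal_def Let_def urban_renewal_square_def double_circuit_def
    by (elim exE conjE) (intro exI conjI; (assumption | rule refl))
  then show ?thesis by (elim exE) (rule urban_renewal_square.coherent_T')
qed

theorem mainTheorem1:
  fixes T T' :: "('e, 'v, complex ^ 'n) tiling"
  assumes "CARD('n) \<ge> 3"
    and "double_circuit T"
    and "coherent T"
    and "move_M1 T T' \<or> urban_renewal T T'"
    and "double_circuit T'"
    and "nonzero_pairings T'"
  shows "coherent T'"
  using assms(4) coherent_move_M1[OF _ assms(2,3,5,6)] coherent_urban_renewal[OF _ assms(2,3,5,6)]
  by blast

end
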